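(* Let $X$ be a compact topological space with the trivial filtration of formal dimension $n$ (a single stratum, which is regular). Give the open cone $\mathring cX$ the conical filtration $\{\mathtt v\}\subseteq\mathring cX$ and a perversity $\overline p$, determined by the value $\overline p(\mathtt v)$ on the apex. Set $m=D\overline p(\mathtt v)=(n+1)-2-\overline p(\mathtt v)$. Then the simplicial set $\mathscr G_{\overline p}(\mathring cX)$ is an $m$-Postnikov stage of the simplicial set $\mathrm{Sing}\,X$.
   Context: Cone. $\mathring cX=X\times[0,1[/X\times\{0\}$ has apex $\mathtt v=[x,0]$. It has formal dimension $n+1$, with the apex the only singular stratum (of codimension $n+1$). Full simplices and the Gajer space. A simplex $\sigma\colon\Delta^j\to\mathring cX$ is $\overline p$-allowable if $\dim\sigma^{-1}(\mathtt v)\le j-(n+1)+\overline p(\mathtt v)$. Here $\dim$ is polyhedral dimension, i.e. the minimal dimension of a polyhedron in $\Delta^j$ containing the set, with $\dim\emptyset=-\infty$. A simplex is $\overline p$-full if it and all its iterated faces are allowable. The $\overline p$-full simplices form a Kan simplicial subset $\mathscr G_{\overline p}(\mathring cX)$ of $\mathrm{Sing}(\mathring cX)$. Postnikov stage. $X$ is identified with $X\times\{1/2\}\subseteq\mathring cX\setminus\{\mathtt v\}$, so that $\mathrm{Sing}\,X$ maps into $\mathscr G_{\overline p}(\mathring cX)$. Being an $m$-Postnikov stage means that this map induces isomorphisms on $\pi_j$ for $j\le m$ (at every base point), and that $\pi_j(\mathscr G_{\overline p}(\mathring cX))=0$ for $j>m$. *)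

theory Defs
  imports "HOL-Analysis.Analysis" "HOL-Homology.Homology"
begin

text \<open>Points of the open cone: None is the apex v, Some (x,t) is the class of (x,t) with 0 < t < 1.\<close>

definition cone_quot :: "'a \<times> real \<Rightarrow> ('a \<times> real) option" where
  "cone_quot z = (if snd z = 0 then None else Some z)"

definition cone_pre :: "'a topology \<Rightarrow> ('a \<times> real) topology" where
  "cone_pre X = prod_topology X (subtopology euclideanreal {0..<1})"

text \<open>Quotient topology of X x [0,1[ by the map collapsing X x {0}.\<close>
definition open_cone :: "'a topology \<Rightarrow> ('a \<times> real) option topology" where
  "open_cone X = topology (\<lambda>U. U \<subseteq> cone_quot ` topspace (cone_pre X) \<and>
      openin (cone_pre X) {z \<in> topspace (cone_pre X). cone_quot z \<in> U})"

lemma istopology_open_cone: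
  "istopology (\<lambda>U. U \<subseteq> cone_quot ` topspace (cone_pre X) \<and>
      openin (cone_pre X) {z \<in> topspace (cone_pre X). cone_quot z \<in> U})"
proof -
  let ?P = "cone_pre X" and ?C = "cone_quot ` topspace (cone_pre X)"
  have 1: "openin ?P {z \<in> topspace ?P. cone_quot z \<in> S \<inter> T}"
    if "openin ?P {z \<in> topspace ?P. cone_quot z \<in> S}" "openin ?P {z \<in> topspace ?P. cone_quot z \<in> T}"
    for S T :: "('a \<times> real) option set"
  proof -
    have "{z \<in> topspace ?P. cone_quot z \<in> S \<inter> T} =
        {z \<in> topspace ?P. cone_quot z \<in> S} \<inter> {z \<in> topspace ?P. cone_quot z \<in> T}" by auto
    then show ?thesis using that by auto
  qed
  have 2: "openin ?P {z \<in> topspace ?P. cone_quot z \<in> \<Union>K}"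
    if "\<forall>U\<in>K. openin ?P {z \<in> topspace ?P. cone_quot z \<in> U}"
    for K :: "('a \<times> real) option set set"
  proof -
    have "{z \<in> topspace ?P. cone_quot z \<in> \<Union>K} =
        \<Union>((\<lambda>U. {z \<in> topspace ?P. cone_quot z \<in> U}) ` K)" by auto
    then show ?thesis using that by (auto intro!: openin_Union)
  qed
  show ?thesis unfolding istopology_def
    using 1 2 by blast
qed

definition cone_apex :: "('a \<times> real) option" where
  "cone_apex = None"

definition cone_incl :: "'a \<Rightarrow> ('a \<times> real) option" where
  "cone_incl x = Some (x, 1/2)"

text \<open>The polyhedral dimension of a set S is the
  minimal dimension of such a polyhedron containing S; hence dim S \<le> d iff S lies in a polyhedron
  of dimension \<le> d.\<close>

text \<open>Affine notions in the coordinate space nat \<Rightarrow> real (which carries no real_vector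
  instance in the library), written out explicitly for finite point sets.\<close>
definition conv_hull_fin :: "(nat \<Rightarrow> real) set \<Rightarrow> (nat \<Rightarrow> real) set" where
  "conv_hull_fin T = {u. \<exists>c. (\<forall>t\<in>T. 0 \<le> c t) \<and> (\<Sum>t\<in>T. c t) = 1 \<and>
                              u = (\<lambda>i. \<Sum>t\<in>T. c t * t i)}"

definition aff_indep_fin :: "(nat \<Rightarrow> real) set \<Rightarrow> bool" where
  "aff_indep_fin T \<longleftrightarrow> (\<forall>c. (\<Sum>t\<in>T. c t) = 0 \<and> (\<forall>i. (\<Sum>t\<in>T. c t * t i) = 0)
                             \<longrightarrow> (\<forall>t\<in>T. c t = 0))"

definition polyhedron_of_dim_le :: "nat \<Rightarrow> (nat \<Rightarrow> real) set \<Rightarrow> int \<Rightarrow> bool" where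
  "polyhedron_of_dim_le j P d \<longleftrightarrow>
     (\<exists>\<T>. finite \<T> \<and>
        (\<forall>T\<in>\<T>. finite T \<and> aff_indep_fin T \<and> T \<subseteq> standard_simplex j
                 \<and> int (card T) - 1 \<le> d) \<and>
        P = \<Union>(conv_hull_fin ` \<T>))"

definition poly_dim_le :: "nat \<Rightarrow> (nat \<Rightarrow> real) set \<Rightarrow> int \<Rightarrow> bool" where
  "poly_dim_le j S d \<longleftrightarrow> (\<exists>P. S \<subseteq> P \<and> polyhedron_of_dim_le j P d)"

definition allowable ::
  "nat \<Rightarrow> int \<Rightarrow> nat \<Rightarrow> ((nat \<Rightarrow> real) \<Rightarrow> ('a \<times> real) option) \<Rightarrow> bool" where
  "allowable n pv j \<sigma> \<longleftrightarrow>
     poly_dim_le j {u \<in> standard_simplex j. \<sigma> u = cone_apex} (int j - (int n + 1) + pv)"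

inductive iter_face :: "nat \<Rightarrow> ((nat \<Rightarrow> real) \<Rightarrow> 'b) \<Rightarrow> nat \<Rightarrow> ((nat \<Rightarrow> real) \<Rightarrow> 'b) \<Rightarrow> bool"
  for j \<sigma> where
  self: "iter_face j \<sigma> j \<sigma>"
| face: "iter_face j \<sigma> k \<tau> \<Longrightarrow> 1 \<le> k \<Longrightarrow> i \<le> k \<Longrightarrow>
          iter_face j \<sigma> (k - 1) (singular_face k i \<tau>)"

definition full :: "nat \<Rightarrow> int \<Rightarrow> nat \<Rightarrow> ((nat \<Rightarrow> real) \<Rightarrow> ('a \<times> real) option) \<Rightarrow> bool" where
  "full n pv j \<sigma> \<longleftrightarrow> (\<forall>k \<tau>. iter_face j \<sigma> k \<tau> \<longrightarrow> allowable n pv k \<tau>)"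

text \<open>The Gajer space G_p(cX): simplicial subset of Sing(cX) of p-full simplices, given by its
  sets of j-simplices (face maps are singular_face).\<close>
definition gajer :: "'a topology \<Rightarrow> nat \<Rightarrow> int \<Rightarrow> nat \<Rightarrow> ((nat \<Rightarrow> real) \<Rightarrow> ('a \<times> real) option) set" where
  "gajer X n pv j = {\<sigma>. singular_simplex j (open_cone X) \<sigma> \<and> full n pv j \<sigma>}"

definition Sing :: "'b topology \<Rightarrow> nat \<Rightarrow> ((nat \<Rightarrow> real) \<Rightarrow> 'b) set" where
  "Sing Y j = {\<sigma>. singular_simplex j Y \<sigma>}"

definition const_simplex :: "nat \<Rightarrow> 'b \<Rightarrow> (nat \<Rightarrow> real) \<Rightarrow> 'b" where
  "const_simplex j y = restrict (\<lambda>_. y) (standard_simplex j)"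

text \<open>Representatives of elements of pi_j(K, y): j-simplices all of whose faces are the degenerate
  simplex at y (for j = 0: all vertices).\<close>
definition sphere_reps :: "(nat \<Rightarrow> ((nat \<Rightarrow> real) \<Rightarrow> 'b) set) \<Rightarrow> nat \<Rightarrow> 'b \<Rightarrow> ((nat \<Rightarrow> real) \<Rightarrow> 'b) set" where
  "sphere_reps K j y = {\<sigma> \<in> K j. 0 < j \<longrightarrow> (\<forall>i\<le>j. singular_face j i \<sigma> = const_simplex (j - 1) y)}"

definition shomotopic :: "(nat \<Rightarrow> ((nat \<Rightarrow> real) \<Rightarrow> 'b) set) \<Rightarrow> nat \<Rightarrow> 'b \<Rightarrow>
     ((nat \<Rightarrow> real) \<Rightarrow> 'b) \<Rightarrow> ((nat \<Rightarrow> real) \<Rightarrow> 'b) \<Rightarrow> bool" where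
  "shomotopic K j y \<sigma> \<tau> \<longleftrightarrow>
     (\<exists>\<omega> \<in> K (Suc j). (\<forall>i<j. singular_face (Suc j) i \<omega> = const_simplex j y) \<and>
        singular_face (Suc j) j \<omega> = \<sigma> \<and> singular_face (Suc j) (Suc j) \<omega> = \<tau>)"

definition induces_bij_pi ::
  "(nat \<Rightarrow> ((nat \<Rightarrow> real) \<Rightarrow> 'b) set) \<Rightarrow> (nat \<Rightarrow> ((nat \<Rightarrow> real) \<Rightarrow> 'c) set) \<Rightarrow> ('b \<Rightarrow> 'c)
     \<Rightarrow> nat \<Rightarrow> 'b \<Rightarrow> bool" where
  "induces_bij_pi K L f j y \<longleftrightarrow>
     (\<forall>\<tau> \<in> sphere_reps L j (f y). \<exists>\<sigma> \<in> sphere_reps K j y.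
         shomotopic L j (f y) (restrict (f \<circ> \<sigma>) (standard_simplex j)) \<tau>) \<and>
     (\<forall>\<sigma> \<in> sphere_reps K j y. \<forall>\<sigma>' \<in> sphere_reps K j y.
         shomotopic L j (f y) (restrict (f \<circ> \<sigma>) (standard_simplex j))
                              (restrict (f \<circ> \<sigma>') (standard_simplex j))
         \<longrightarrow> shomotopic K j y \<sigma> \<sigma>')"

definition pi_trivial :: "(nat \<Rightarrow> ((nat \<Rightarrow> real) \<Rightarrow> 'b) set) \<Rightarrow> nat \<Rightarrow> 'b \<Rightarrow> bool" where
  "pi_trivial K j y \<longleftrightarrow>
     (\<forall>\<sigma> \<in> sphere_reps K j y. \<forall>\<tau> \<in> sphere_reps K j y. shomotopic K j y \<sigma> \<tau>)"

text \<open>G is an m-Postnikov stage of Sing X via the inclusion X = X x {1/2}: isomorphisms on pi_j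
  for j \<le> m at every base point, and pi_j G = 0 for j > m at every base point (vertex) of G.\<close>
definition postnikov_stage_cone :: "'a topology \<Rightarrow> nat \<Rightarrow> int \<Rightarrow> int \<Rightarrow> bool" where
  "postnikov_stage_cone X n pv m \<longleftrightarrow>
     (\<forall>j x. int j \<le> m \<longrightarrow> x \<in> topspace X \<longrightarrow>
        induces_bij_pi (Sing X) (gajer X n pv) cone_incl j x) \<and>
     (\<forall>j y. int j > m \<longrightarrow> const_simplex 0 y \<in> gajer X n pv 0 \<longrightarrow>
        pi_trivial (gajer X n pv) j y)"

end

theory Submission
  imports Defs
begin

text \<open>Let \<open>d(j) = j - (n + 1) + p(v)\<close> be the allowability bound of a \<open>j\<close>-simplex, so that
  \<open>m\<close> is the largest \<open>j\<close> with \<open>d(j + 1) < 0\<close>. A set of negative polyhedral dimension is empty,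
  so for \<open>j \<le> m\<close> full simplices of dimension \<open>\<le> j + 1\<close> miss the apex and all spheres and
  homotopies of dimension \<open>j\<close> live in \<open>X \<times> ]0,1[\<close>: projecting to \<open>X\<close> gives injectivity on
  \<open>\<pi>\<^sub>j\<close>, and pushing the height of a sphere to \<open>1/2\<close> along the last degeneracy gives
  surjectivity. For \<open>j > m\<close> two spheres \<open>\<sigma>\<close>, \<open>\<tau>\<close> at a vertex \<open>y\<close> are homotopic through
  the cone, with the apex at the barycentre of \<open>\<Delta>\<^sup>j\<^sup>+\<^sup>1\<close>, over the boundary map given by
  \<open>\<tau>\<close>, \<open>\<sigma>\<close> and \<open>y\<close>. Its apex preimage is the barycentre together with the joins of the
  apex preimages of \<open>\<sigma>\<close> and \<open>\<tau>\<close> to it, which has dimension \<open>\<le> d(j + 1)\<close> precisely because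
  \<open>d(j + 1) \<ge> 0\<close>. Compactness of \<open>X\<close> is used, via the tube lemma, for the continuity of such
  maps at the apex.\<close>

section \<open>The open cone\<close>

definition cone_height :: "('a \<times> real) option \<Rightarrow> real" where
  "cone_height z = (case z of None \<Rightarrow> 0 | Some p \<Rightarrow> snd p)"

text \<open>Only meaningful off the apex, where it is the projection to \<open>X\<close>.\<close>
definition cone_base :: "('a \<times> real) option \<Rightarrow> 'a" where
  "cone_base z = fst (the z)"

lemma cone_height_simps [simp]: "cone_height None = 0" "cone_height (Some (a, t)) = t"
  by (auto simp: cone_height_def)

lemma cone_base_Some [simp]: "cone_base (Some (a, t)) = a"
  by (simp add: cone_base_def)

lemma topspace_cone_pre: "topspace (cone_pre X) = topspace X \<times> {0..<1}"
  by (simp add: cone_pre_def)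

lemma openin_open_cone:
  "openin (open_cone X) U \<longleftrightarrow> U \<subseteq> cone_quot ` topspace (cone_pre X) \<and>
      openin (cone_pre X) {z \<in> topspace (cone_pre X). cone_quot z \<in> U}"
  unfolding open_cone_def using istopology_open_cone[of X] by simp

lemma topspace_open_cone_eq_image: "topspace (open_cone X) = cone_quot ` topspace (cone_pre X)"
proof (rule antisym)
  show "topspace (open_cone X) \<subseteq> cone_quot ` topspace (cone_pre X)"
    using openin_open_cone[of X "topspace (open_cone X)"] by simp
  have "{z \<in> topspace (cone_pre X). cone_quot z \<in> cone_quot ` topspace (cone_pre X)}
      = topspace (cone_pre X)"
    by auto
  then have "openin (open_cone X) (cone_quot ` topspace (cone_pre X))"
    unfolding openin_open_cone by simp
  then show "cone_quot ` topspace (cone_pre X) \<subseteq> topspace (open_cone X)"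
    by (rule openin_subset)
qed

lemma in_topspace_open_cone:
  "z \<in> topspace (open_cone X) \<longleftrightarrow> topspace X \<noteq> {} \<and>
     (z = None \<or> (\<exists>a t. z = Some (a, t) \<and> a \<in> topspace X \<and> 0 < t \<and> t < 1))"
proof -
  have None_img: "None \<in> cone_quot ` (A \<times> {0..<1}) \<longleftrightarrow> A \<noteq> {}" for A :: "'a set"
  proof
    assume "A \<noteq> {}"
    then obtain a where "a \<in> A" by blast
    then show "None \<in> cone_quot ` (A \<times> {0..<1})"
      by (auto simp: cone_quot_def image_iff intro!: bexI[of _ "(a, 0)"])
  qed auto
  have Some_img: "Some (a, t) \<in> cone_quot ` (topspace X \<times> {0..<1}) \<longleftrightarrow>
      a \<in> topspace X \<and> 0 < t \<and> t < 1" for a t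
    by (auto simp: cone_quot_def image_iff split: if_splits intro: bexI[of _ "(a, t)"])
  show ?thesis
  proof (cases z)
    case None
    then show ?thesis using None_img by (simp add: topspace_open_cone_eq_image topspace_cone_pre)
  next
    case (Some p)
    then obtain a t where "z = Some (a, t)" by (cases p) auto
    then show ?thesis using Some_img[of a t]
      by (simp add: topspace_open_cone_eq_image topspace_cone_pre) (metis empty_iff null_topspace_iff_trivial)
  qed
qed

lemma continuous_map_cone_quot: "continuous_map (cone_pre X) (open_cone X) cone_quot"
  unfolding continuous_map_def by (auto simp: topspace_open_cone_eq_image openin_open_cone)

lemma continuous_map_cone_height: "continuous_map (open_cone X) euclideanreal cone_height"
  unfolding continuous_map_def
proof (intro conjI allI impI)
  fix U :: "real set" assume U: "openin euclideanreal U"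
  have "{q \<in> topspace (cone_pre X). cone_quot q \<in> {z \<in> topspace (open_cone X). cone_height z \<in> U}}
      = {q \<in> topspace (cone_pre X). snd q \<in> U}"
    by (auto simp: topspace_open_cone_eq_image cone_quot_def)
  moreover have "continuous_map (cone_pre X) euclideanreal snd"
    unfolding cone_pre_def
    using continuous_map_snd[of X "subtopology euclideanreal {0..<1}"]
    by (simp add: continuous_map_in_subtopology)
  ultimately show "openin (open_cone X) {z \<in> topspace (open_cone X). cone_height z \<in> U}"
    unfolding openin_open_cone using openin_continuous_map_preimage U
    by (fastforce simp: topspace_open_cone_eq_image)
qed simp

lemma continuous_map_cone_base:
  "continuous_map (subtopology (open_cone X) (topspace (open_cone X) - {None})) X cone_base"
  unfolding continuous_map_def
proof (intro conjI allI impI)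
  fix W assume W: "openin X W"
  define V where "V = {z \<in> topspace (open_cone X). z \<noteq> None \<and> cone_base z \<in> W}"
  have eq: "{q \<in> topspace (cone_pre X). cone_quot q \<in> V} = W \<times> {0<..<1}"
    using openin_subset[OF W]
    by (auto simp: V_def topspace_open_cone_eq_image topspace_cone_pre cone_quot_def image_iff)
  have "openin (subtopology euclideanreal {0..<1}) {0<..<(1::real)}"
    unfolding openin_subtopology by (intro exI[of _ "{0<..<1}"]) auto
  then have "openin (cone_pre X) (W \<times> {0<..<1})"
    unfolding cone_pre_def using W by (simp add: openin_prod_Times_iff)
  then have "openin (open_cone X) V"
    unfolding openin_open_cone eq by (auto simp: V_def topspace_open_cone_eq_image)
  moreover have "{z \<in> topspace (subtopology (open_cone X) (topspace (open_cone X) - {None})).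
      cone_base z \<in> W} = V \<inter> (topspace (open_cone X) - {None})"
    by (auto simp: V_def)
  ultimately show "openin (subtopology (open_cone X) (topspace (open_cone X) - {None}))
     {z \<in> topspace (subtopology (open_cone X) (topspace (open_cone X) - {None})). cone_base z \<in> W}"
    by (auto simp: openin_subtopology)
qed (auto simp: in_topspace_open_cone)

lemma continuous_map_cone_base_comp:
  assumes f: "continuous_map Z (open_cone X) f" and "\<And>z. z \<in> topspace Z \<Longrightarrow> f z \<noteq> None"
  shows "continuous_map Z X (cone_base \<circ> f)"
proof -
  have "f \<in> topspace Z \<rightarrow> topspace (open_cone X) - {None}"
    using continuous_map_image_subset_topspace[OF f] assms(2) by (auto simp del: not_None_eq)
  then have "continuous_map Z (subtopology (open_cone X) (topspace (open_cone X) - {None})) f"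
    using f by (simp add: continuous_map_in_subtopology)
  then show ?thesis using continuous_map_compose continuous_map_cone_base by blast
qed

lemma open_cone_apex_neighbourhood:
  assumes X: "compact_space X" and U: "openin (open_cone X) U" and apex: "None \<in> U"
  obtains e where "e > 0" "\<And>z. z \<in> topspace (open_cone X) \<Longrightarrow> cone_height z < e \<Longrightarrow> z \<in> U"
proof -
  define Q where "Q = {q \<in> topspace (cone_pre X). cone_quot q \<in> U}"
  have "openin (prod_topology X (subtopology euclideanreal {0..<1})) Q"
    using U by (simp add: openin_open_cone Q_def cone_pre_def)
  moreover have "topspace X \<times> {0} \<subseteq> Q"
    using apex by (auto simp: Q_def topspace_cone_pre cone_quot_def)
  ultimately obtain W V where V: "openin (subtopology euclideanreal {0..<1}) V" "0 \<in> V"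
    "topspace X \<subseteq> W" "W \<times> V \<subseteq> Q"
    using tube_lemma_left[of X "subtopology euclideanreal {0..<1}" Q "topspace X" 0] X
    by (auto simp: compact_space_def)
  then obtain T where T: "open T" "V = T \<inter> {0..<1}"
    by (auto simp: openin_subtopology)
  then obtain e where e: "e > 0" "ball 0 e \<subseteq> T"
    using V(2) by (meson IntD1 openE)
  show thesis
  proof
    fix z assume z: "z \<in> topspace (open_cone X)" "cone_height z < min e 1"
    then consider "z = None" | a t where "z = Some (a, t)" "a \<in> topspace X" "0 < t" "t < 1"
      by (auto simp: in_topspace_open_cone)
    then show "z \<in> U"
    proof cases
      case (2 a t)
      then have "t \<in> V" using z e T by (auto simp: dist_real_def)
      then have "(a, t) \<in> Q" using 2 V(3,4) by blast
      then show ?thesis using 2 by (simp add: Q_def cone_quot_def)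
    qed (use apex in simp)
  qed (use e in simp)
qed

lemma continuous_map_into_open_cone_off_apex:
  assumes f: "\<And>z. z \<in> topspace Z \<Longrightarrow> f z \<in> topspace (open_cone X) - {None}"
    and height: "continuous_map Z euclideanreal (cone_height \<circ> f)"
    and base: "continuous_map Z X (cone_base \<circ> f)"
  shows "continuous_map Z (open_cone X) f"
proof -
  have "continuous_map Z (cone_pre X) (\<lambda>z. (cone_base (f z), cone_height (f z)))"
    unfolding cone_pre_def continuous_map_paired continuous_map_in_subtopology
    using base height f by (fastforce simp: o_def in_topspace_open_cone)
  then have "continuous_map Z (open_cone X) (\<lambda>z. cone_quot (cone_base (f z), cone_height (f z)))"
    using continuous_map_cone_quot continuous_map_compose by (fastforce simp: o_def)
  moreover have "cone_quot (cone_base (f z), cone_height (f z)) = f z" if "z \<in> topspace Z" for z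
    using f[OF that] by (force simp: in_topspace_open_cone cone_quot_def)
  ultimately show ?thesis by (rule continuous_map_eq)
qed

lemma continuous_map_into_open_cone:
  assumes X: "compact_space X"
    and f: "f \<in> topspace Z \<rightarrow> topspace (open_cone X)"
    and height: "continuous_map Z euclideanreal (cone_height \<circ> f)"
    and base: "continuous_map (subtopology Z {z \<in> topspace Z. f z \<noteq> None}) X (cone_base \<circ> f)"
  shows "continuous_map Z (open_cone X) f"
proof -
  define Z' where "Z' = {z \<in> topspace Z. f z \<noteq> None}"
  have fZ: "\<And>z. z \<in> topspace Z \<Longrightarrow> f z \<in> topspace (open_cone X)" using f by blast
  have "Z' = {z \<in> topspace Z. (cone_height \<circ> f) z \<in> {0<..}}"
    using fZ by (force simp: Z'_def in_topspace_open_cone)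
  then have Z': "openin Z Z'"
    using openin_continuous_map_preimage[OF height, of "{0<..}"] by simp
  have fZ': "continuous_map (subtopology Z Z') (open_cone X) f"
    using fZ base continuous_map_from_subtopology[OF height]
    by (intro continuous_map_into_open_cone_off_apex) (auto simp: Z'_def)
  show ?thesis
    unfolding continuous_map_def
  proof (intro conjI allI impI f)
    fix U assume U: "openin (open_cone X) U"
    have "{z \<in> topspace (subtopology Z Z'). f z \<in> U} = {z \<in> Z'. f z \<in> U}"
      by (auto simp: Z'_def)
    then have "openin (subtopology Z Z') {z \<in> Z'. f z \<in> U}"
      using openin_continuous_map_preimage[OF fZ' U] by simp
    then have off_apex: "openin Z {z \<in> Z'. f z \<in> U}"
      using Z' by (rule openin_trans_full)
    show "openin Z {z \<in> topspace Z. f z \<in> U}"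
    proof (cases "None \<in> U")
      case True
      obtain e where e: "e > 0"
        "\<And>z. z \<in> topspace (open_cone X) \<Longrightarrow> cone_height z < e \<Longrightarrow> z \<in> U"
        using open_cone_apex_neighbourhood[OF X U True] by blast
      have "{z \<in> topspace Z. f z \<in> U} =
          {z \<in> Z'. f z \<in> U} \<union> {z \<in> topspace Z. (cone_height \<circ> f) z \<in> {..<e}}"
        using e fZ True
        by (auto simp: Z'_def) (metis cone_height_simps(1) option.exhaust surj_pair)
      then show ?thesis
        using off_apex openin_continuous_map_preimage[OF height, of "{..<e}"] by auto
    next
      case False
      then have "{z \<in> topspace Z. f z \<in> U} = {z \<in> Z'. f z \<in> U}"
        by (auto simp: Z'_def) (metis option.exhaust surj_pair)
      then show ?thesis using off_apex by simp
    qed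
  qed
qed

section \<open>Polyhedral dimension\<close>

lemma conv_hull_fin_empty [simp]: "conv_hull_fin {} = {}"
  by (simp add: conv_hull_fin_def)

lemma poly_dim_le_iff_cover:
  "poly_dim_le j S d \<longleftrightarrow> (\<exists>\<T>. finite \<T> \<and>
     (\<forall>T\<in>\<T>. finite T \<and> aff_indep_fin T \<and> T \<subseteq> standard_simplex j \<and> int (card T) - 1 \<le> d) \<and>
     S \<subseteq> \<Union>(conv_hull_fin ` \<T>))"
  unfolding poly_dim_le_def polyhedron_of_dim_le_def
  by (rule iffI, (elim exE conjE, hypsubst, blast), blast)

lemma poly_dim_le_empty: "poly_dim_le j {} d"
  unfolding poly_dim_le_iff_cover by (intro exI[of _ "{}"]) auto

lemma poly_dim_le_negative_imp_empty:
  assumes "poly_dim_le j S d" "d < 0" shows "S = {}"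
proof -
  obtain \<T> where \<T>: "S \<subseteq> \<Union>(conv_hull_fin ` \<T>)"
    "\<And>T. T \<in> \<T> \<Longrightarrow> finite T \<and> int (card T) - 1 \<le> d"
    using assms(1) unfolding poly_dim_le_iff_cover by blast
  have "conv_hull_fin T = {}" if "T \<in> \<T>" for T
  proof -
    have "card T = 0" using \<T>(2)[OF that] assms(2) by linarith
    then show ?thesis using \<T>(2)[OF that] by simp
  qed
  then show ?thesis using \<T>(1) by blast
qed

lemma poly_dim_le_mono:
  assumes "poly_dim_le j S d" "S' \<subseteq> S" "d \<le> d'" shows "poly_dim_le j S' d'"
proof -
  obtain P where "S \<subseteq> P" "polyhedron_of_dim_le j P d"
    using assms(1) unfolding poly_dim_le_def by blast
  then have "S' \<subseteq> P" "polyhedron_of_dim_le j P d'"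
    using assms(2,3) unfolding polyhedron_of_dim_le_def by (blast, fastforce)
  then show ?thesis unfolding poly_dim_le_def by blast
qed

lemma poly_dim_le_Un:
  assumes "poly_dim_le j A d" "poly_dim_le j B d" shows "poly_dim_le j (A \<union> B) d"
proof -
  obtain \<T> where \<T>: "A \<subseteq> \<Union>(conv_hull_fin ` \<T>)" "finite \<T>"
    "\<forall>T\<in>\<T>. finite T \<and> aff_indep_fin T \<and> T \<subseteq> standard_simplex j \<and> int (card T) - 1 \<le> d"
    using assms(1) unfolding poly_dim_le_iff_cover by blast
  obtain \<U> where \<U>: "B \<subseteq> \<Union>(conv_hull_fin ` \<U>)" "finite \<U>"
    "\<forall>T\<in>\<U>. finite T \<and> aff_indep_fin T \<and> T \<subseteq> standard_simplex j \<and> int (card T) - 1 \<le> d"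
    using assms(2) unfolding poly_dim_le_iff_cover by blast
  show ?thesis
    unfolding poly_dim_le_iff_cover using \<T> \<U> by (intro exI[of _ "\<T> \<union> \<U>"]) auto
qed

lemma poly_dim_le_singleton:
  assumes "x \<in> standard_simplex j" "0 \<le> d" shows "poly_dim_le j {x} d"
proof -
  have "{x} \<subseteq> conv_hull_fin {x}"
    by (auto simp: conv_hull_fin_def intro!: exI[of _ "\<lambda>_. 1"])
  moreover have "aff_indep_fin {x}" by (simp add: aff_indep_fin_def)
  ultimately show ?thesis
    unfolding poly_dim_le_iff_cover using assms by (intro exI[of _ "{{x}}"]) auto
qed

definition simplex_vertex :: "nat \<Rightarrow> nat \<Rightarrow> real" where
  "simplex_vertex i = (\<lambda>k. if k = i then 1 else 0)"

lemma poly_dim_le_standard_simplex: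
  assumes "int j \<le> d" "S \<subseteq> standard_simplex j" shows "poly_dim_le j S d"
proof -
  let ?T = "simplex_vertex ` {..j}"
  have inj: "inj_on simplex_vertex {..j}"
    by (auto simp: inj_on_def simplex_vertex_def fun_eq_iff)
  have coord: "(\<Sum>t\<in>?T. c t * t i) = (if i \<le> j then c (simplex_vertex i) else 0)"
    for c :: "(nat \<Rightarrow> real) \<Rightarrow> real" and i
  proof -
    have "(\<Sum>t\<in>?T. c t * t i) = (\<Sum>l\<le>j. c (simplex_vertex l) * simplex_vertex l i)"
      using inj by (simp add: sum.reindex)
    also have "\<dots> = (\<Sum>l\<le>j. if l = i then c (simplex_vertex i) else 0)"
      by (rule sum.cong) (auto simp: simplex_vertex_def)
    finally show ?thesis by (simp add: sum.delta)
  qed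
  have "aff_indep_fin ?T"
    unfolding aff_indep_fin_def
  proof (intro allI impI ballI)
    fix c t assume c: "sum c ?T = 0 \<and> (\<forall>i. (\<Sum>t\<in>?T. c t * t i) = 0)" and "t \<in> ?T"
    then obtain i where "i \<le> j" "t = simplex_vertex i" by auto
    then show "c t = 0" using c coord[of c i] by simp
  qed
  moreover have "standard_simplex j \<subseteq> conv_hull_fin ?T"
  proof
    fix u assume u: "u \<in> standard_simplex j"
    define c where "c t = u (the_inv_into {..j} simplex_vertex t)" for t
    have c: "c (simplex_vertex i) = u i" if "i \<le> j" for i
      using that inj by (simp add: c_def the_inv_into_f_f)
    have "sum c ?T = 1"
      using inj u by (simp add: sum.reindex c standard_simplex_def)
    moreover have "u = (\<lambda>i. \<Sum>t\<in>?T. c t * t i)"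
      using u by (auto simp: coord c fun_eq_iff standard_simplex_def)
    moreover have "\<forall>t\<in>?T. 0 \<le> c t" using u c by (auto simp: standard_simplex_def)
    ultimately show "u \<in> conv_hull_fin ?T" unfolding conv_hull_fin_def by blast
  qed
  moreover have "card ?T = Suc j" using inj by (simp add: card_image)
  ultimately show ?thesis
    unfolding poly_dim_le_iff_cover using assms
    by (intro exI[of _ "{?T}"]) (auto simp: simplex_vertex_def)
qed

lemma inj_simplical_face: "inj (simplical_face k :: (nat \<Rightarrow> real) \<Rightarrow> _)"
proof (rule injI)
  fix x y :: "nat \<Rightarrow> real" assume eq: "simplical_face k x = simplical_face k y"
  show "x = y"
  proof
    fix i
    show "x i = y i"
      using fun_cong[OF eq, of i] fun_cong[OF eq, of "Suc i"]
      by (cases "i < k") (simp_all add: simplical_face_def)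
  qed
qed

lemma sum_insert_simplical_face:
  fixes T :: "(nat \<Rightarrow> real) set"
  assumes "finite T" "b k \<noteq> 0"
  shows "(\<Sum>t\<in>insert b (simplical_face k ` T). g t) = g b + (\<Sum>t\<in>T. g (simplical_face k t))"
proof -
  have "b \<notin> simplical_face k ` T"
    using assms(2) by (auto simp: simplical_face_def)
  then show ?thesis
    using assms(1) inj_on_subset[OF inj_simplical_face] by (simp add: sum.reindex)
qed

lemma aff_indep_fin_insert_simplical_face:
  assumes T: "finite T" "aff_indep_fin T" and b: "b k \<noteq> 0"
  shows "aff_indep_fin (insert b (simplical_face k ` T))"
  unfolding aff_indep_fin_def
proof (intro allI impI)
  let ?F = "simplical_face k"
  fix c assume c: "(\<Sum>t\<in>insert b (?F ` T). c t) = 0 \<and>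
      (\<forall>i. (\<Sum>t\<in>insert b (?F ` T). c t * t i) = 0)"
  have ci: "c b * b i + (\<Sum>t\<in>T. c (?F t) * ?F t i) = 0" for i
    using c sum_insert_simplical_face[of T b k, OF T(1) b, of "\<lambda>t. c t * t i"] by simp
  have cb: "c b = 0"
    using ci[of k] b by (simp add: simplical_face_def)
  \<comment> \<open>the face map only inserts a zero coordinate, so the relation descends to \<open>T\<close>\<close>
  have "(\<Sum>t\<in>T. c (?F t)) = 0 \<and> (\<forall>i. (\<Sum>t\<in>T. c (?F t) * t i) = 0)"
  proof (intro conjI allI)
    show "(\<Sum>t\<in>T. c (?F t)) = 0"
      using c sum_insert_simplical_face[of T b k, OF T(1) b, of c] cb by simp
    fix i
    show "(\<Sum>t\<in>T. c (?F t) * t i) = 0"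
      using ci[of i] ci[of "Suc i"] cb by (cases "i < k") (simp_all add: simplical_face_def)
  qed
  then have "\<forall>t\<in>T. c (?F t) = 0"
    using T(2) unfolding aff_indep_fin_def by (elim allE[where x="\<lambda>t. c (?F t)"]) blast
  then show "\<forall>t\<in>insert b (?F ` T). c t = 0" using cb by auto
qed

lemma conv_hull_fin_insert_simplical_face:
  assumes T: "finite T" and b: "b k \<noteq> 0" and s: "s \<in> conv_hull_fin T" and r: "0 \<le> r" "r \<le> 1"
  shows "(\<lambda>i. (1 - r) * b i + r * simplical_face k s i) \<in> conv_hull_fin (insert b (simplical_face k ` T))"
proof -
  let ?F = "simplical_face k"
  obtain c where c: "\<forall>t\<in>T. 0 \<le> c t" "sum c T = 1" "s = (\<lambda>i. \<Sum>t\<in>T. c t * t i)"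
    using s by (auto simp: conv_hull_fin_def)
  define c' where "c' x = (if x = b then 1 - r else r * c (inv_into T ?F x))" for x
  have b_notin: "b \<notin> ?F ` T"
    using b by (auto simp: simplical_face_def)
  have c'F: "c' (?F t) = r * c t" if "t \<in> T" for t
    using that b_notin inj_on_subset[OF inj_simplical_face] by (auto simp: c'_def)
  have "sum c' (insert b (?F ` T)) = c' b + (\<Sum>t\<in>T. c' (?F t))"
    by (rule sum_insert_simplical_face[of T b k, OF T b])
  also have "\<dots> = (1 - r) + (\<Sum>t\<in>T. r * c t)"
    using c'F by (simp add: c'_def)
  also have "\<dots> = 1"
    using c(2) by (simp add: sum_distrib_left[symmetric])
  finally have "sum c' (insert b (?F ` T)) = 1" .
  moreover have "\<forall>t\<in>insert b (?F ` T). 0 \<le> c' t"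
    using c(1) c'F r by (auto simp: c'_def)
  moreover have "(1 - r) * b i + r * ?F s i = (\<Sum>t\<in>insert b (?F ` T). c' t * t i)" for i
  proof -
    have "(\<Sum>t\<in>insert b (?F ` T). c' t * t i) = c' b * b i + (\<Sum>t\<in>T. c' (?F t) * ?F t i)"
      by (rule sum_insert_simplical_face[of T b k, OF T b])
    also have "\<dots> = (1 - r) * b i + r * (\<Sum>t\<in>T. c t * ?F t i)"
      using c'F by (simp add: c'_def[of b] sum_distrib_left mult.assoc)
    also have "(\<Sum>t\<in>T. c t * ?F t i) = ?F s i"
      using c(3) by (simp add: simplical_face_def)
    finally show ?thesis by simp
  qed
  ultimately show ?thesis unfolding conv_hull_fin_def by blast
qed

definition face_join :: "(nat \<Rightarrow> real) \<Rightarrow> nat \<Rightarrow> (nat \<Rightarrow> real) set \<Rightarrow> (nat \<Rightarrow> real) set" where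
  "face_join b k S = {(\<lambda>i. (1 - r) * b i + r * simplical_face k s i) | s r. s \<in> S \<and> 0 \<le> r \<and> r \<le> 1}"

lemma face_join_memI:
  "s \<in> S \<Longrightarrow> 0 \<le> r \<Longrightarrow> r \<le> 1 \<Longrightarrow>
    (\<lambda>i. (1 - r) * b i + r * simplical_face k s i) \<in> face_join b k S"
  by (auto simp: face_join_def)

lemma poly_dim_le_face_join:
  assumes S: "poly_dim_le p S d" and b: "b \<in> standard_simplex (Suc p)" "b k \<noteq> 0"
    and k: "k \<le> Suc p"
  shows "poly_dim_le (Suc p) (face_join b k S) (d + 1)"
proof -
  let ?J = "face_join b k S"
  let ?C = "\<lambda>T. insert b (simplical_face k ` T)"
  obtain \<T> where \<T>: "S \<subseteq> \<Union>(conv_hull_fin ` \<T>)" "finite \<T>"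
    "\<And>T. T \<in> \<T> \<Longrightarrow> finite T \<and> aff_indep_fin T \<and> T \<subseteq> standard_simplex p \<and> int (card T) - 1 \<le> d"
    using S unfolding poly_dim_le_iff_cover by blast
  have "int (card (?C T)) - 1 \<le> d + 1" if "T \<in> \<T>" for T
    using sum_insert_simplical_face[of T b k "\<lambda>_. 1::nat"] \<T>(3)[OF that] b(2) by simp
  moreover have "?C T \<subseteq> standard_simplex (Suc p)" if "T \<in> \<T>" for T
    using \<T>(3)[OF that] b(1) k simplical_face_in_standard_simplex[of "Suc p" k] by auto
  moreover have "aff_indep_fin (?C T)" if "T \<in> \<T>" for T
    using \<T>(3)[OF that] b(2) by (simp add: aff_indep_fin_insert_simplical_face)
  moreover have "?J \<subseteq> \<Union>(conv_hull_fin ` (?C ` \<T>))"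
  proof
    fix u assume "u \<in> ?J"
    then obtain s r where u: "u = (\<lambda>i. (1 - r) * b i + r * simplical_face k s i)"
      and s: "s \<in> S" and r: "0 \<le> r" "r \<le> 1"
      by (auto simp: face_join_def)
    obtain T where "T \<in> \<T>" "s \<in> conv_hull_fin T" using s \<T>(1) by blast
    then show "u \<in> \<Union>(conv_hull_fin ` (?C ` \<T>))"
      using conv_hull_fin_insert_simplical_face[of T b k s r] \<T>(3) b(2) r u by blast
  qed
  ultimately show ?thesis
    unfolding poly_dim_le_iff_cover using \<T>(2,3) by (intro exI[of _ "?C ` \<T>"]) auto
qed

section \<open>Coordinates on the standard simplex\<close>

abbreviation simplex_topology :: "nat \<Rightarrow> (nat \<Rightarrow> real) topology" where
  "simplex_topology p \<equiv> subtopology (powertop_real UNIV) (standard_simplex p)"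

lemma continuous_map_coordinate:
  "continuous_map (subtopology (powertop_real UNIV) S) euclideanreal (\<lambda>u. u i)"
  by (rule continuous_map_from_subtopology) (auto intro: continuous_map_product_projection)

lemma standard_simplex_nonneg: "u \<in> standard_simplex p \<Longrightarrow> 0 \<le> u i"
  by (simp add: standard_simplex_def)

lemma simplical_face_in_standard_simplex_Suc:
  "k \<le> Suc p \<Longrightarrow> x \<in> standard_simplex p \<Longrightarrow> simplical_face k x \<in> standard_simplex (Suc p)"
  using simplical_face_in_standard_simplex[of "Suc p" k x] by simp

lemma continuous_map_squeeze:
  assumes g: "continuous_map Z euclideanreal g"
    and h: "continuous_map (subtopology Z {z \<in> topspace Z. g z > 0}) euclideanreal h"
    and bound: "\<And>z. z \<in> topspace Z \<Longrightarrow> \<bar>h z\<bar> \<le> g z"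
  shows "continuous_map Z euclideanreal h"
  unfolding continuous_map_def
proof (intro conjI allI impI)
  fix U :: "real set" assume U: "openin euclideanreal U"
  define A where "A = {z \<in> topspace Z. g z > 0}"
  have A: "openin Z A"
    using openin_continuous_map_preimage[OF g, of "{0<..}"] by (simp add: A_def)
  have "openin (subtopology Z A) {z \<in> topspace (subtopology Z A). h z \<in> U}"
    using openin_continuous_map_preimage[OF h[folded A_def] U] .
  then have pos: "openin Z {z \<in> A. h z \<in> U}"
    using A by (auto simp: A_def Collect_conj_eq Int_ac dest: openin_trans_full)
  show "openin Z {z \<in> topspace Z. h z \<in> U}"
  proof (cases "0 \<in> U")
    case True
    then obtain e where e: "e > 0" "ball 0 e \<subseteq> U"
      using U by (auto simp: open_contains_ball)
    have "{z \<in> topspace Z. h z \<in> U} = {z \<in> A. h z \<in> U} \<union> {z \<in> topspace Z. g z \<in> {..<e}}"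
    proof (intro equalityI subsetI)
      fix z assume "z \<in> {z \<in> topspace Z. h z \<in> U}"
      then show "z \<in> {z \<in> A. h z \<in> U} \<union> {z \<in> topspace Z. g z \<in> {..<e}}"
        using e by (cases "g z > 0") (auto simp: A_def)
    next
      fix z assume "z \<in> {z \<in> A. h z \<in> U} \<union> {z \<in> topspace Z. g z \<in> {..<e}}"
      then show "z \<in> {z \<in> topspace Z. h z \<in> U}"
      proof
        assume z: "z \<in> {z \<in> topspace Z. g z \<in> {..<e}}"
        then have "\<bar>h z\<bar> < e" using bound[of z] by auto
        then show ?thesis using z e by (auto simp: dist_real_def)
      qed (auto simp: A_def)
    qed
    then show ?thesis
      using pos openin_continuous_map_preimage[OF g, of "{..<e}"] by auto
  next
    case False
    have "g z > 0" if "z \<in> topspace Z" "h z \<in> U" for z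
    proof (rule ccontr)
      assume "\<not> g z > 0"
      then have "h z = 0" using bound[OF that(1)] by linarith
      then show False using False that by simp
    qed
    then have "{z \<in> topspace Z. h z \<in> U} = {z \<in> A. h z \<in> U}"
      by (auto simp: A_def)
    then show ?thesis using pos by simp
  qed
qed simp

definition delete_coord :: "nat \<Rightarrow> (nat \<Rightarrow> real) \<Rightarrow> nat \<Rightarrow> real" where
  "delete_coord k w = (\<lambda>i. if i < k then w i else w (Suc i))"

lemma simplical_face_delete_coord: "w k = 0 \<Longrightarrow> simplical_face k (delete_coord k w) = w"
  by (auto simp: delete_coord_def simplical_face_def fun_eq_iff not_less_eq less_Suc_eq)

lemma delete_coord_simplical_face [simp]: "delete_coord k (simplical_face k v) = v"
  by (auto simp: delete_coord_def simplical_face_def fun_eq_iff)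

lemma delete_coord_in_standard_simplex:
  assumes w: "w \<in> standard_simplex (Suc p)" and k: "k \<le> Suc p" and wk: "w k = 0"
  shows "delete_coord k w \<in> standard_simplex p"
proof -
  have "(\<Sum>i\<le>Suc p. w i) = (\<Sum>i\<le>Suc p. simplical_face k (delete_coord k w) i)"
    using simplical_face_delete_coord[of w k, OF wk] by simp
  also have "\<dots> = (\<Sum>i\<le>Suc p. if i < k then delete_coord k w i
                               else if i = k then 0 else delete_coord k w (i - Suc 0))"
    unfolding simplical_face_def by (simp only: One_nat_def)
  also have "\<dots> = (\<Sum>i\<le>p. delete_coord k w i)"
    using sum.zero_middle[of "Suc p" k "delete_coord k w" "delete_coord k w"] k by simp
  finally have "(\<Sum>i\<le>p. delete_coord k w i) = 1"
    using w by (simp add: standard_simplex_def)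
  then show ?thesis
    using w k by (auto simp: standard_simplex_def delete_coord_def)
qed

lemma continuous_map_delete_coord:
  assumes "k \<le> Suc p" "S \<subseteq> {w \<in> standard_simplex (Suc p). w k = 0}"
  shows "continuous_map (subtopology (powertop_real UNIV) S) (simplex_topology p) (delete_coord k)"
proof -
  have "continuous_map (powertop_real UNIV) euclideanreal (\<lambda>w. delete_coord k w i)" for i
    by (auto simp: delete_coord_def intro: continuous_map_product_projection)
  moreover have "delete_coord k w \<in> standard_simplex p" if "w \<in> S" for w
    using assms that delete_coord_in_standard_simplex by blast
  ultimately show ?thesis
    by (auto simp: continuous_map_in_subtopology continuous_map_componentwise
        continuous_map_from_subtopology)
qed

definition last_degeneracy :: "nat \<Rightarrow> (nat \<Rightarrow> real) \<Rightarrow> nat \<Rightarrow> real" where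
  "last_degeneracy j u = (\<lambda>i. if i < j then u i else if i = j then u j + u (Suc j) else 0)"

lemma last_degeneracy_in_standard_simplex:
  assumes u: "u \<in> standard_simplex (Suc j)"
  shows "last_degeneracy j u \<in> standard_simplex j"
proof -
  have "(\<Sum>i\<le>j. last_degeneracy j u i) = (\<Sum>i\<le>Suc j. u i)"
    by (simp add: last_degeneracy_def lessThan_Suc_atMost[symmetric])
  moreover have "u j + u (Suc j) \<le> (\<Sum>i\<le>Suc j. u i)"
    using u sum_mono2[of "{..Suc j}" "{j, Suc j}" u] by (simp add: standard_simplex_def)
  ultimately show ?thesis
    using u by (auto simp: standard_simplex_def last_degeneracy_def add_nonneg_nonneg)
qed

lemma continuous_map_last_degeneracy:
  "continuous_map (simplex_topology (Suc j)) (simplex_topology j) (last_degeneracy j)"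
proof -
  have "continuous_map (simplex_topology (Suc j)) euclideanreal (\<lambda>u. last_degeneracy j u i)" for i
    unfolding last_degeneracy_def by (auto intro!: continuous_intros continuous_map_coordinate)
  then show ?thesis
    using last_degeneracy_in_standard_simplex
    by (auto simp: continuous_map_in_subtopology continuous_map_componentwise)
qed

lemma last_degeneracy_simplical_face:
  assumes "v \<in> standard_simplex j" "k = j \<or> k = Suc j"
  shows "last_degeneracy j (simplical_face k v) = v"
  using assms by (auto simp: last_degeneracy_def simplical_face_def standard_simplex_def fun_eq_iff)

lemma last_degeneracy_simplical_face_less: "i < j \<Longrightarrow> last_degeneracy j (simplical_face i v) i = 0"
  by (simp add: last_degeneracy_def simplical_face_def)

definition barycentre :: "nat \<Rightarrow> nat \<Rightarrow> real" where
  "barycentre p = (\<lambda>i. if i \<le> p then 1 / (real p + 1) else 0)"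

lemma barycentre_in_standard_simplex: "barycentre p \<in> standard_simplex p"
  by (auto simp: barycentre_def standard_simplex_def)

text \<open>Polar coordinates on \<open>\<Delta>\<^sup>N\<close> about its barycentre: every point is
  \<open>(1 - radius N u) \<cdot> barycentre N + radius N u \<cdot> radial_proj N u\<close> with \<open>radial_proj N u\<close>
  on the boundary (\<open>radial_decomposition\<close>).\<close>

fun coord_min :: "nat \<Rightarrow> (nat \<Rightarrow> real) \<Rightarrow> real" where
  "coord_min 0 u = u 0"
| "coord_min (Suc k) u = min (coord_min k u) (u (Suc k))"

definition radius :: "nat \<Rightarrow> (nat \<Rightarrow> real) \<Rightarrow> real" where
  "radius N u = 1 - real (Suc N) * coord_min N u"

definition radial_proj :: "nat \<Rightarrow> (nat \<Rightarrow> real) \<Rightarrow> nat \<Rightarrow> real" where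
  "radial_proj N u = (\<lambda>i. if i \<le> N then (u i - coord_min N u) / radius N u else 0)"

definition simplex_boundary :: "nat \<Rightarrow> (nat \<Rightarrow> real) set" where
  "simplex_boundary N = {w \<in> standard_simplex N. \<exists>i\<le>N. w i = 0}"

lemma simplical_face_in_simplex_boundary:
  "k \<le> Suc p \<Longrightarrow> v \<in> standard_simplex p \<Longrightarrow> simplical_face k v \<in> simplex_boundary (Suc p)"
  using simplical_face_in_standard_simplex_Suc[of k p v]
  by (auto simp: simplex_boundary_def simplical_face_def)

lemma coord_min_le: "i \<le> k \<Longrightarrow> coord_min k u \<le> u i"
  by (induction k) (auto simp: le_Suc_eq min.coboundedI1)

lemma coord_min_attained: "\<exists>i\<le>k. coord_min k u = u i"
  by (induction k) (auto simp: min_def le_Suc_eq)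

lemma coord_min_nonneg: "u \<in> standard_simplex N \<Longrightarrow> 0 \<le> coord_min N u"
  using coord_min_attained[of N u] by (auto simp: standard_simplex_def)

lemma continuous_map_coord_min:
  "continuous_map (subtopology (powertop_real UNIV) S) euclideanreal (coord_min k)"
  by (induction k) (auto intro!: continuous_intros continuous_map_coordinate)

lemma continuous_map_radius:
  "continuous_map (subtopology (powertop_real UNIV) S) euclideanreal (radius N)"
  unfolding radius_def[abs_def] by (intro continuous_intros continuous_map_coord_min)

lemma radius_range:
  assumes u: "u \<in> standard_simplex N" shows "0 \<le> radius N u" "radius N u \<le> 1"
proof -
  have "(\<Sum>i\<le>N. coord_min N u) \<le> (\<Sum>i\<le>N. u i)"
    by (intro sum_mono coord_min_le) auto
  then show "0 \<le> radius N u" using u by (simp add: radius_def standard_simplex_def)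
  show "radius N u \<le> 1"
    using coord_min_attained[of N u] u by (auto simp: radius_def standard_simplex_def)
qed

lemma radius_eq_0_imp_barycentre:
  assumes u: "u \<in> standard_simplex N" and r: "radius N u = 0"
  shows "u = barycentre N"
proof
  fix i
  have m: "coord_min N u = 1 / real (Suc N)" using r by (simp add: radius_def field_simps)
  have "(\<Sum>l\<le>N. u l - coord_min N u) = 0"
    using u m by (simp add: sum_subtractf standard_simplex_def)
  then have "\<forall>l\<in>{..N}. u l - coord_min N u = 0"
    using sum_nonneg_eq_0_iff[of "{..N}" "\<lambda>l. u l - coord_min N u"] coord_min_le by auto
  then show "u i = barycentre N i"
    using u m by (cases "i \<le> N") (auto simp: barycentre_def standard_simplex_def)
qed

lemma simplex_boundary_polar:
  assumes "w \<in> simplex_boundary N" shows "radius N w = 1" "radial_proj N w = w"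
proof -
  obtain i where i: "i \<le> N" "w i = 0" "w \<in> standard_simplex N"
    using assms by (auto simp: simplex_boundary_def)
  then have m: "coord_min N w = 0"
    using coord_min_le[OF i(1), of w] coord_min_nonneg[OF i(3)] by simp
  then show "radius N w = 1" by (simp add: radius_def)
  show "radial_proj N w = w"
    using i(3) m by (auto simp: radial_proj_def radius_def fun_eq_iff standard_simplex_def)
qed

lemma radial_proj_in_simplex_boundary:
  assumes u: "u \<in> standard_simplex N" and r: "radius N u > 0"
  shows "radial_proj N u \<in> simplex_boundary N"
proof -
  obtain i where i: "i \<le> N" "coord_min N u = u i" using coord_min_attained by blast
  have "(\<Sum>l\<le>N. radial_proj N u l) = ((\<Sum>l\<le>N. u l) - real (Suc N) * coord_min N u) / radius N u"
    by (simp add: radial_proj_def sum_divide_distrib[symmetric] sum_subtractf)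
  also have "\<dots> = 1" using u r by (simp add: standard_simplex_def radius_def)
  finally have sum: "(\<Sum>l\<le>N. radial_proj N u l) = 1" .
  have nonneg: "0 \<le> radial_proj N u l" for l
    using coord_min_le r by (simp add: radial_proj_def)
  have "radial_proj N u l \<le> 1" for l
  proof (cases "l \<le> N")
    case True
    then show ?thesis using sum member_le_sum[of l "{..N}" "radial_proj N u"] nonneg by simp
  qed (simp add: radial_proj_def)
  then show ?thesis
    using sum nonneg i by (auto simp: simplex_boundary_def standard_simplex_def radial_proj_def)
qed

lemma radial_decomposition:
  assumes u: "u \<in> standard_simplex N" and r: "radius N u > 0"
  shows "u = (\<lambda>i. (1 - radius N u) * barycentre N i + radius N u * radial_proj N u i)"
proof
  fix i
  show "u i = (1 - radius N u) * barycentre N i + radius N u * radial_proj N u i"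
  proof (cases "i \<le> N")
    case True
    have "(1 - radius N u) * barycentre N i = coord_min N u"
      using True by (simp add: radius_def barycentre_def field_simps)
    then show ?thesis using True r by (simp add: radial_proj_def)
  qed (use u in \<open>simp add: standard_simplex_def barycentre_def radial_proj_def\<close>)
qed

lemma continuous_map_radial_proj:
  "continuous_map (subtopology (simplex_topology N) {u \<in> standard_simplex N. radius N u > 0})
     (subtopology (powertop_real UNIV) (simplex_boundary N)) (radial_proj N)"
proof -
  have "continuous_map (subtopology (simplex_topology N) {u \<in> standard_simplex N. radius N u > 0})
      euclideanreal (\<lambda>u. radial_proj N u i)" for i
    unfolding radial_proj_def subtopology_subtopology
    by (auto intro!: continuous_intros continuous_map_coordinate continuous_map_coord_min
        continuous_map_radius)
  then show ?thesis
    using radial_proj_in_simplex_boundary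
    by (auto simp: continuous_map_in_subtopology continuous_map_componentwise)
qed

lemma sphere_reps_boundary:
  assumes \<rho>: "\<rho> \<in> sphere_reps K j y" and v: "v \<in> standard_simplex j" "k \<le> j" "v k = 0"
  shows "\<rho> v = y"
proof (cases j)
  case 0
  then show ?thesis using v by (simp add: standard_simplex_0)
next
  case (Suc p)
  have "singular_face j k \<rho> = const_simplex p y"
    using \<rho> v(2) Suc by (auto simp: sphere_reps_def)
  moreover have "delete_coord k v \<in> standard_simplex p"
    using delete_coord_in_standard_simplex[of v p k] v Suc by simp
  ultimately have "singular_face j k \<rho> (delete_coord k v) = y"
    by (simp add: const_simplex_def)
  then show ?thesis
    using Suc \<open>delete_coord k v \<in> standard_simplex p\<close>
    by (simp add: singular_face_def simplical_face_delete_coord[of v k, OF v(3)])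
qed

lemma singular_face_restrict_comp:
  assumes "k \<le> Suc p"
  shows "singular_face (Suc p) k (restrict (g \<circ> f) (standard_simplex (Suc p))) =
         restrict (g \<circ> singular_face (Suc p) k f) (standard_simplex p)"
  using simplical_face_in_standard_simplex_Suc[OF assms]
  by (auto simp: singular_face_def fun_eq_iff)

lemma iter_face_values:
  assumes "iter_face j \<sigma> k \<tau>" "u \<in> standard_simplex k"
  shows "\<exists>v \<in> standard_simplex j. \<tau> u = \<sigma> v"
  using assms
proof (induction arbitrary: u rule: iter_face.induct)
  case (face k \<tau> i)
  then obtain q where k: "k = Suc q" by (cases k) auto
  then have "simplical_face i u \<in> standard_simplex k"
    using simplical_face_in_standard_simplex_Suc face.hyps face.prems by simp
  then show ?case using face.IH face.prems by (auto simp: singular_face_def)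
qed blast

lemma iter_face_cases:
  assumes "iter_face j \<sigma> k \<tau>"
  shows "(k = j \<and> \<tau> = \<sigma>) \<or> (\<exists>i\<le>j. iter_face (j - 1) (singular_face j i \<sigma>) k \<tau>)"
  using assms
proof (induction rule: iter_face.induct)
  case (face k \<tau> i)
  then show ?case
    using iter_face.self iter_face.face by (metis le_refl diff_le_self le_trans)
qed simp

lemma full_imp_allowable: "full n pv j \<sigma> \<Longrightarrow> allowable n pv j \<sigma>"
  by (simp add: full_def iter_face.self)

lemma full_SucI:
  assumes "allowable n pv (Suc j) \<omega>"
    and "\<And>i. i \<le> Suc j \<Longrightarrow> full n pv j (singular_face (Suc j) i \<omega>)"
  shows "full n pv (Suc j) \<omega>"
  using assms iter_face_cases unfolding full_def by fastforce

lemma full_if_apex_free: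
  assumes "\<forall>u \<in> standard_simplex j. \<sigma> u \<noteq> None"
  shows "full n pv j \<sigma>"
  unfolding full_def allowable_def
proof (intro allI impI)
  fix k \<tau> assume "iter_face j \<sigma> k \<tau>"
  then have "{u \<in> standard_simplex k. \<tau> u = cone_apex} = {}"
    using iter_face_values assms by (fastforce simp: cone_apex_def)
  then show "poly_dim_le k {u \<in> standard_simplex k. \<tau> u = cone_apex} (int k - (int n + 1) + pv)"
    using poly_dim_le_empty by metis
qed

lemma full_if_large_perversity:
  assumes "int n + 1 \<le> pv"
  shows "full n pv j \<sigma>"
  unfolding full_def allowable_def using assms
  by (auto intro: poly_dim_le_standard_simplex)

lemma full_const_simplex:
  assumes "y \<noteq> None \<or> int n + 1 \<le> pv"
  shows "full n pv j (const_simplex j y)"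
  using assms full_if_large_perversity full_if_apex_free[of j "const_simplex j y"]
  by (auto simp: const_simplex_def)

lemma gajer_apex_free:
  assumes "\<sigma> \<in> gajer X n pv p" "int p - (int n + 1) + pv < 0" "u \<in> standard_simplex p"
  shows "\<sigma> u \<noteq> None"
  using assms poly_dim_le_negative_imp_empty[of p "{u \<in> standard_simplex p. \<sigma> u = cone_apex}"]
  by (auto simp: gajer_def allowable_def cone_apex_def dest!: full_imp_allowable)

section \<open>Homotopy groups in degrees at most \<open>m\<close>\<close>

lemma cone_incl_coords [simp]: "cone_base (cone_incl x) = x" "cone_height (cone_incl x) = 1/2"
  by (simp_all add: cone_incl_def)

lemma singular_simplex_cone_base:
  assumes "singular_simplex p (open_cone X) f" "\<forall>u \<in> standard_simplex p. f u \<noteq> None"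
  shows "singular_simplex p X (restrict (cone_base \<circ> f) (standard_simplex p))"
  unfolding singular_simplex_def
  using continuous_map_cone_base_comp[of "simplex_topology p" X f] assms
  by (simp add: singular_simplex_def continuous_map_eq[of _ _ "cone_base \<circ> f"])

lemma shomotopic_Sing_of_gajer:
  assumes low: "int (Suc j) - (int n + 1) + pv < 0"
    and \<sigma>: "\<sigma> \<in> sphere_reps (Sing X) j x" and \<sigma>': "\<sigma>' \<in> sphere_reps (Sing X) j x"
    and h: "shomotopic (gajer X n pv) j (cone_incl x)
              (restrict (cone_incl \<circ> \<sigma>) (standard_simplex j))
              (restrict (cone_incl \<circ> \<sigma>') (standard_simplex j))"
  shows "shomotopic (Sing X) j x \<sigma> \<sigma>'"
proof -
  obtain \<omega> where \<omega>: "\<omega> \<in> gajer X n pv (Suc j)"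
    and faces: "\<forall>i<j. singular_face (Suc j) i \<omega> = const_simplex j (cone_incl x)"
      "singular_face (Suc j) j \<omega> = restrict (cone_incl \<circ> \<sigma>) (standard_simplex j)"
      "singular_face (Suc j) (Suc j) \<omega> = restrict (cone_incl \<circ> \<sigma>') (standard_simplex j)"
    using h unfolding shomotopic_def by blast
  define \<omega>' where "\<omega>' = restrict (cone_base \<circ> \<omega>) (standard_simplex (Suc j))"
  have "\<forall>u \<in> standard_simplex (Suc j). \<omega> u \<noteq> None"
    using gajer_apex_free[OF \<omega> low] by blast
  then have "\<omega>' \<in> Sing X (Suc j)"
    using \<omega> singular_simplex_cone_base[of "Suc j" X \<omega>] by (simp add: \<omega>'_def Sing_def gajer_def)
  moreover have face: "singular_face (Suc j) i \<omega>' =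
      restrict (cone_base \<circ> singular_face (Suc j) i \<omega>) (standard_simplex j)" if "i \<le> Suc j" for i
    using singular_face_restrict_comp[OF that] by (simp add: \<omega>'_def)
  moreover have lift: "restrict (cone_base \<circ> restrict (cone_incl \<circ> \<rho>) (standard_simplex j))
      (standard_simplex j) = \<rho>" if "\<rho> \<in> sphere_reps (Sing X) j x" for \<rho>
    using that by (auto simp: sphere_reps_def Sing_def singular_simplex_def fun_eq_iff
        extensional_def)
  ultimately show ?thesis
    unfolding shomotopic_def
  proof (intro bexI[of _ \<omega>'] conjI allI impI)
    fix i assume "i < j"
    then show "singular_face (Suc j) i \<omega>' = const_simplex j x"
      using face faces(1) by (auto simp: const_simplex_def fun_eq_iff)
  next
    show "singular_face (Suc j) j \<omega>' = \<sigma>" using face[of j] faces(2) lift[OF \<sigma>] by simp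
    show "singular_face (Suc j) (Suc j) \<omega>' = \<sigma>'" using face[of "Suc j"] faces(3) lift[OF \<sigma>'] by simp
  qed
qed

text \<open>Deformation of a \<open>j\<close>-simplex \<open>\<tau>\<close> of \<open>X \<times> ]0,1[\<close> onto level \<open>1/2\<close>: the height of
  \<open>\<tau>\<close> is interpolated linearly with weight \<open>u\<^sub>j / (u\<^sub>j + u\<^sub>j\<^sub>+\<^sub>1)\<close>, which is discontinuous where
  \<open>u\<^sub>j + u\<^sub>j\<^sub>+\<^sub>1 = 0\<close>; there \<open>\<tau>\<close> sits at the base point at height \<open>1/2\<close>, so the product
  stays continuous.\<close>
definition height_weight :: "nat \<Rightarrow> (nat \<Rightarrow> real) \<Rightarrow> real" where
  "height_weight j u = (if u j + u (Suc j) = 0 then 0 else u j / (u j + u (Suc j)))"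

definition flatten_homotopy ::
  "nat \<Rightarrow> ((nat \<Rightarrow> real) \<Rightarrow> ('a \<times> real) option) \<Rightarrow> (nat \<Rightarrow> real) \<Rightarrow> ('a \<times> real) option" where
  "flatten_homotopy j \<tau> = restrict (\<lambda>u. Some (cone_base (\<tau> (last_degeneracy j u)),
      1/2 + (cone_height (\<tau> (last_degeneracy j u)) - 1/2) * height_weight j u))
    (standard_simplex (Suc j))"

lemma height_weight_range:
  "u \<in> standard_simplex (Suc j) \<Longrightarrow> 0 \<le> height_weight j u \<and> height_weight j u \<le> 1"
  using standard_simplex_nonneg[of u "Suc j" j] standard_simplex_nonneg[of u "Suc j" "Suc j"]
  by (auto simp: height_weight_def divide_simps)

locale flattenable_simplex =
  fixes X :: "'a topology" and j :: nat and \<tau> and x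
  assumes compact: "compact_space X"
    and simplex: "singular_simplex j (open_cone X) \<tau>"
    and apex_free: "\<forall>u \<in> standard_simplex j. \<tau> u \<noteq> None"
    and boundary: "\<And>v k. v \<in> standard_simplex j \<Longrightarrow> k \<le> j \<Longrightarrow> v k = 0 \<Longrightarrow> \<tau> v = cone_incl x"
begin

definition height :: "(nat \<Rightarrow> real) \<Rightarrow> real" where
  "height u = cone_height (\<tau> (last_degeneracy j u))"

lemma degenerate_values:
  assumes "u \<in> standard_simplex (Suc j)"
  shows "\<exists>a. \<tau> (last_degeneracy j u) = Some (a, height u) \<and> a \<in> topspace X \<and> 0 < height u \<and> height u < 1"
proof -
  have "\<tau> (last_degeneracy j u) \<in> topspace (open_cone X)"
    using simplex last_degeneracy_in_standard_simplex[OF assms]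
    by (auto simp: singular_simplex_def continuous_map_def)
  then show ?thesis
    using apex_free last_degeneracy_in_standard_simplex[OF assms]
    by (auto simp: in_topspace_open_cone height_def)
qed

lemma flatten_homotopy_eq:
  "u \<in> standard_simplex (Suc j) \<Longrightarrow> flatten_homotopy j \<tau> u =
     Some (cone_base (\<tau> (last_degeneracy j u)), 1/2 + (height u - 1/2) * height_weight j u)"
  by (simp add: flatten_homotopy_def height_def)

lemma continuous_map_simplex: "continuous_map (simplex_topology j) (open_cone X) \<tau>"
  using simplex by (simp add: singular_simplex_def)

lemma continuous_map_height: "continuous_map (simplex_topology (Suc j)) euclideanreal height"
proof -
  have "continuous_map (simplex_topology (Suc j)) euclideanreal (cone_height \<circ> \<tau> \<circ> last_degeneracy j)"
    using continuous_map_last_degeneracy continuous_map_simplex continuous_map_cone_height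
    by (meson continuous_map_compose)
  then show ?thesis by (rule continuous_map_eq) (simp add: height_def)
qed

lemma continuous_map_scaled_height:
  "continuous_map (simplex_topology (Suc j)) euclideanreal (\<lambda>u. (height u - 1/2) * height_weight j u)"
proof (rule continuous_map_squeeze)
  show "continuous_map (simplex_topology (Suc j)) euclideanreal (\<lambda>u. \<bar>height u - 1/2\<bar>)"
    by (intro continuous_intros continuous_map_height)
  let ?S = "{u \<in> topspace (simplex_topology (Suc j)). 0 < \<bar>height u - 1/2\<bar>}"
  have denom: "u j + u (Suc j) \<noteq> 0" if "u \<in> ?S" for u
  proof
    assume "u j + u (Suc j) = 0"
    then have "last_degeneracy j u j = 0" by (simp add: last_degeneracy_def)
    then have "height u = 1/2"
      using that boundary[OF last_degeneracy_in_standard_simplex, of u j] by (simp add: height_def)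
    then show False using that by simp
  qed
  have "continuous_map (subtopology (simplex_topology (Suc j)) ?S) euclideanreal
      (\<lambda>u. (height u - 1/2) * (u j / (u j + u (Suc j))))"
    using denom by (intro continuous_intros continuous_map_from_subtopology[OF continuous_map_height]
        continuous_map_from_subtopology[OF continuous_map_coordinate]) auto
  then show "continuous_map (subtopology (simplex_topology (Suc j)) ?S) euclideanreal
      (\<lambda>u. (height u - 1/2) * height_weight j u)"
    by (rule continuous_map_eq) (use denom in \<open>auto simp: height_weight_def\<close>)
next
  fix u assume "u \<in> topspace (simplex_topology (Suc j))"
  then show "\<bar>(height u - 1/2) * height_weight j u\<bar> \<le> \<bar>height u - 1/2\<bar>"
    using height_weight_range[of u j] by (auto simp: abs_mult intro: mult_left_le)
qed

lemma singular_simplex_flatten_homotopy: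
  "singular_simplex (Suc j) (open_cone X) (flatten_homotopy j \<tau>)"
  unfolding singular_simplex_def
proof
  show "continuous_map (simplex_topology (Suc j)) (open_cone X) (flatten_homotopy j \<tau>)"
  proof (rule continuous_map_into_open_cone[OF compact])
    show "flatten_homotopy j \<tau> \<in> topspace (simplex_topology (Suc j)) \<rightarrow> topspace (open_cone X)"
    proof
      fix u assume "u \<in> topspace (simplex_topology (Suc j))"
      then have u: "u \<in> standard_simplex (Suc j)" by simp
      obtain a where a: "\<tau> (last_degeneracy j u) = Some (a, height u)" "a \<in> topspace X"
        "0 < height u" "height u < 1"
        using degenerate_values[OF u] by blast
      have "\<bar>height u - 1/2\<bar> * height_weight j u \<le> \<bar>height u - 1/2\<bar>"
        using height_weight_range[OF u] by (simp add: mult_left_le)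
      moreover have "\<bar>height u - 1/2\<bar> < 1/2"
        unfolding abs_less_iff using a(3,4) by linarith
      ultimately have "\<bar>(height u - 1/2) * height_weight j u\<bar> < 1/2"
        using height_weight_range[OF u] by (simp add: abs_mult)
      then have "0 < 1/2 + (height u - 1/2) * height_weight j u"
        "1/2 + (height u - 1/2) * height_weight j u < 1"
        unfolding abs_less_iff by linarith+
      moreover have "flatten_homotopy j \<tau> u = Some (a, 1/2 + (height u - 1/2) * height_weight j u)"
        using u a(1) by (simp add: flatten_homotopy_eq)
      ultimately show "flatten_homotopy j \<tau> u \<in> topspace (open_cone X)"
        using a(2) by (auto simp: in_topspace_open_cone)
    qed
    show "continuous_map (simplex_topology (Suc j)) euclideanreal (cone_height \<circ> flatten_homotopy j \<tau>)"
      by (rule continuous_map_eq[OF continuous_map_add[OF continuous_map_const[of _ _ "1/2", THEN iffD2]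
            continuous_map_scaled_height]]) (auto simp: flatten_homotopy_eq)
    have "continuous_map (simplex_topology j) X (cone_base \<circ> \<tau>)"
      using apex_free by (intro continuous_map_cone_base_comp[OF continuous_map_simplex]) auto
    then have "continuous_map (simplex_topology (Suc j)) X (cone_base \<circ> \<tau> \<circ> last_degeneracy j)"
      using continuous_map_last_degeneracy by (meson continuous_map_compose)
    then show "continuous_map (subtopology (simplex_topology (Suc j))
        {u \<in> topspace (simplex_topology (Suc j)). flatten_homotopy j \<tau> u \<noteq> None}) X
        (cone_base \<circ> flatten_homotopy j \<tau>)"
      by (rule continuous_map_eq[OF continuous_map_from_subtopology])
        (auto simp: flatten_homotopy_def)
  qed
qed (simp add: flatten_homotopy_def)

lemma singular_face_flatten_homotopy:
  "\<And>i. i < j \<Longrightarrow> singular_face (Suc j) i (flatten_homotopy j \<tau>) = const_simplex j (cone_incl x)"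
  "singular_face (Suc j) j (flatten_homotopy j \<tau>) =
     restrict (cone_incl \<circ> restrict (cone_base \<circ> \<tau>) (standard_simplex j)) (standard_simplex j)"
  "singular_face (Suc j) (Suc j) (flatten_homotopy j \<tau>) = \<tau>"
proof -
  have face: "simplical_face i v \<in> standard_simplex (Suc j)" if "i \<le> Suc j" "v \<in> standard_simplex j" for i v
    using simplical_face_in_standard_simplex_Suc that by blast
  show "singular_face (Suc j) i (flatten_homotopy j \<tau>) = const_simplex j (cone_incl x)" if "i < j" for i
  proof -
    have "\<tau> (last_degeneracy j (simplical_face i v)) = cone_incl x" if "v \<in> standard_simplex j" for v
    proof -
      have "last_degeneracy j (simplical_face i v) \<in> standard_simplex j"
        using last_degeneracy_in_standard_simplex face[of i v] \<open>i < j\<close> that by simp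
      then show ?thesis
        using boundary[of _ i] \<open>i < j\<close> last_degeneracy_simplical_face_less by simp
    qed
    then show ?thesis
      using face \<open>i < j\<close>
      by (auto simp: singular_face_def const_simplex_def flatten_homotopy_def fun_eq_iff cone_incl_def)
  qed
  have "flatten_homotopy j \<tau> (simplical_face j v) = cone_incl (cone_base (\<tau> v))"
    if "v \<in> standard_simplex j" for v
    using face[of j v] last_degeneracy_simplical_face[of v j j] that
    by (simp add: flatten_homotopy_def height_weight_def simplical_face_def cone_incl_def)
  then show "singular_face (Suc j) j (flatten_homotopy j \<tau>) =
     restrict (cone_incl \<circ> restrict (cone_base \<circ> \<tau>) (standard_simplex j)) (standard_simplex j)"
    by (auto simp: singular_face_def fun_eq_iff)
  have "flatten_homotopy j \<tau> (simplical_face (Suc j) v) = \<tau> v" if v: "v \<in> standard_simplex j" for v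
  proof (cases "v j = 0")
    case True
    then show ?thesis
      using v face boundary[OF v, of j] last_degeneracy_simplical_face[OF v]
      by (simp add: flatten_homotopy_def height_weight_def simplical_face_def cone_incl_def)
  next
    case False
    obtain a t where "\<tau> v = Some (a, t)"
      using apex_free v by (cases "\<tau> v") auto
    then show ?thesis
      using v face False last_degeneracy_simplical_face[OF v]
      by (simp add: flatten_homotopy_def height_weight_def simplical_face_def)
  qed
  then show "singular_face (Suc j) (Suc j) (flatten_homotopy j \<tau>) = \<tau>"
    using simplex by (auto simp: singular_face_def singular_simplex_def fun_eq_iff extensional_def)
qed

end

lemma gajer_sphere_shomotopic_to_Sing:
  assumes X: "compact_space X" and low: "int (Suc j) - (int n + 1) + pv < 0"
    and \<tau>: "\<tau> \<in> sphere_reps (gajer X n pv) j (cone_incl x)"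
  shows "\<exists>\<sigma> \<in> sphere_reps (Sing X) j x.
    shomotopic (gajer X n pv) j (cone_incl x) (restrict (cone_incl \<circ> \<sigma>) (standard_simplex j)) \<tau>"
proof -
  have \<tau>G: "\<tau> \<in> gajer X n pv j" using \<tau> by (simp add: sphere_reps_def)
  interpret flattenable_simplex X j \<tau> x
    using X \<tau>G gajer_apex_free[OF \<tau>G] low sphere_reps_boundary[OF \<tau>]
    by unfold_locales (auto simp: gajer_def)
  define \<sigma> where "\<sigma> = restrict (cone_base \<circ> \<tau>) (standard_simplex j)"
  have "\<sigma> \<in> sphere_reps (Sing X) j x"
    unfolding sphere_reps_def Sing_def
  proof (intro CollectI conjI impI allI)
    show "singular_simplex j X \<sigma>"
      unfolding \<sigma>_def using simplex apex_free by (rule singular_simplex_cone_base)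
    fix i assume "0 < j" "i \<le> j"
    then obtain p where p: "j = Suc p" "i \<le> Suc p" by (cases j) auto
    then have "singular_face j i \<tau> = const_simplex (j - 1) (cone_incl x)"
      using \<tau> by (simp add: sphere_reps_def)
    then show "singular_face j i \<sigma> = const_simplex (j - 1) x"
      using singular_face_restrict_comp[OF p(2), of cone_base \<tau>] p
      by (auto simp: \<sigma>_def const_simplex_def fun_eq_iff)
  qed
  moreover have "flatten_homotopy j \<tau> \<in> gajer X n pv (Suc j)"
    using singular_simplex_flatten_homotopy
    by (auto simp: gajer_def flatten_homotopy_def intro!: full_if_apex_free)
  ultimately show ?thesis
    unfolding shomotopic_def \<sigma>_def using singular_face_flatten_homotopy by blast
qed

section \<open>Homotopy groups above \<open>m\<close>\<close>

definition cone_rescale :: "real \<Rightarrow> ('a \<times> real) option \<Rightarrow> ('a \<times> real) option" where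
  "cone_rescale r z = (case z of None \<Rightarrow> None | Some p \<Rightarrow> Some (fst p, r * snd p))"

lemma cone_rescale_simps [simp]:
  "cone_rescale r z = None \<longleftrightarrow> z = None"
  "cone_height (cone_rescale r z) = r * cone_height z"
  "cone_base (cone_rescale r z) = cone_base z"
  "cone_rescale 1 z = z"
  by (cases z; auto simp: cone_rescale_def cone_height_def cone_base_def)+

lemma cone_rescale_in_topspace:
  assumes "z \<in> topspace (open_cone X)" "0 < r" "r \<le> 1"
  shows "cone_rescale r z \<in> topspace (open_cone X)"
proof -
  have "0 < r * t \<and> r * t < 1" if "0 < t" "t < 1" for t
  proof -
    have "r * t \<le> t" by (rule mult_left_le_one_le) (use that assms in auto)
    then have "r * t < 1" using that by linarith
    then show ?thesis using that assms by (simp add: mult_pos_pos)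
  qed
  then show ?thesis using assms(1) by (auto simp: in_topspace_open_cone cone_rescale_def)
qed

definition boundary_glue ::
  "nat \<Rightarrow> ((nat \<Rightarrow> real) \<Rightarrow> 'b) \<Rightarrow> ((nat \<Rightarrow> real) \<Rightarrow> 'b) \<Rightarrow> 'b \<Rightarrow> (nat \<Rightarrow> real) \<Rightarrow> 'b" where
  "boundary_glue j \<sigma> \<tau> y w =
     (if w (Suc j) = 0 then \<tau> (delete_coord (Suc j) w) else if w j = 0 then \<sigma> (delete_coord j w) else y)"

text \<open>The simplicial homotopy from \<open>\<sigma>\<close> to \<open>\<tau>\<close>: the cone, with the apex of the open cone at
  the barycentre of \<open>\<Delta>\<^sup>j\<^sup>+\<^sup>1\<close>, over the map of \<open>\<partial>\<Delta>\<^sup>j\<^sup>+\<^sup>1\<close> that is \<open>\<tau>\<close> on the last face, \<open>\<sigma>\<close> on the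
  last but one and \<open>y\<close> on the others.\<close>
definition cone_filling :: "nat \<Rightarrow> ((nat \<Rightarrow> real) \<Rightarrow> ('a \<times> real) option) \<Rightarrow>
    ((nat \<Rightarrow> real) \<Rightarrow> ('a \<times> real) option) \<Rightarrow> ('a \<times> real) option \<Rightarrow> (nat \<Rightarrow> real) \<Rightarrow> ('a \<times> real) option" where
  "cone_filling j \<sigma> \<tau> y = restrict (\<lambda>u. if radius (Suc j) u = 0 then None
      else cone_rescale (radius (Suc j) u) (boundary_glue j \<sigma> \<tau> y (radial_proj (Suc j) u)))
    (standard_simplex (Suc j))"

locale sphere_pair =
  fixes X :: "'a topology" and j :: nat and \<sigma> \<tau> and y
  assumes compact: "compact_space X"
    and \<sigma>_simplex: "singular_simplex j (open_cone X) \<sigma>"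
    and \<tau>_simplex: "singular_simplex j (open_cone X) \<tau>"
    and y_in_topspace: "y \<in> topspace (open_cone X)"
    and \<sigma>_boundary: "\<And>v k. v \<in> standard_simplex j \<Longrightarrow> k \<le> j \<Longrightarrow> v k = 0 \<Longrightarrow> \<sigma> v = y"
    and \<tau>_boundary: "\<And>v k. v \<in> standard_simplex j \<Longrightarrow> k \<le> j \<Longrightarrow> v k = 0 \<Longrightarrow> \<tau> v = y"
begin

lemma boundary_glue_face:
  assumes w: "w \<in> standard_simplex (Suc j)" "k \<le> Suc j" "w k = 0"
  shows "boundary_glue j \<sigma> \<tau> y w = (if k = Suc j then \<tau> (delete_coord (Suc j) w)
           else if k = j then \<sigma> (delete_coord j w) else y)"
proof -
  have \<tau>y: "\<tau> (delete_coord (Suc j) w) = y" if "w (Suc j) = 0" "i \<le> j" "w i = 0" for i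
    using \<tau>_boundary[OF delete_coord_in_standard_simplex[OF w(1) le_refl that(1)] that(2)] that
    by (simp add: delete_coord_def)
  have \<sigma>y: "\<sigma> (delete_coord j w) = y" if "w j = 0" "i \<le> j" "delete_coord j w i = 0" for i
    using \<sigma>_boundary[OF delete_coord_in_standard_simplex[OF w(1) _ that(1)] that(2,3)] by simp
  consider "k = Suc j" | "k = j" | "k < j" using w(2) by linarith
  then show ?thesis
  proof cases
    case 2
    then show ?thesis
      using w(3) \<tau>y[of j] \<sigma>y[of j] by (simp add: boundary_glue_def delete_coord_def)
  next
    case 3
    then show ?thesis
      using w(3) \<tau>y[of k] \<sigma>y[of k] by (simp add: boundary_glue_def delete_coord_def)
  qed (use w(3) in \<open>simp add: boundary_glue_def\<close>)
qed

lemma continuous_map_boundary_glue: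
  "continuous_map (subtopology (powertop_real UNIV) (simplex_boundary (Suc j))) (open_cone X)
     (boundary_glue j \<sigma> \<tau> y)"
proof -
  let ?Z = "subtopology (powertop_real UNIV) (simplex_boundary (Suc j))"
  define T where "T k = {w \<in> simplex_boundary (Suc j). w k = 0}" for k
  define f where "f k = (if k = Suc j then \<tau> \<circ> delete_coord (Suc j)
      else if k = j then \<sigma> \<circ> delete_coord j else (\<lambda>_. y))" for k
  have T: "T k \<subseteq> {w \<in> standard_simplex (Suc j). w k = 0}" for k
    by (auto simp: T_def simplex_boundary_def)
  have glue: "boundary_glue j \<sigma> \<tau> y w = f k w" if "k \<le> Suc j" "w \<in> T k" for k w
  proof -
    have "w \<in> standard_simplex (Suc j)" "w k = 0" using that(2) T by auto
    then show ?thesis using boundary_glue_face that(1) by (simp add: f_def)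
  qed
  show ?thesis
  proof (rule pasting_lemma_closed[where I = "{..Suc j}" and T = T and f = f])
    fix k assume k: "k \<in> {..Suc j}"
    have "closedin ?Z {w \<in> topspace ?Z. w k \<in> {0}}"
      by (rule closedin_continuous_map_preimage[OF continuous_map_coordinate]) auto
    then show "closedin ?Z (T k)" by (simp add: T_def)
    have sub: "subtopology ?Z (T k) = subtopology (powertop_real UNIV) (T k)"
      by (simp add: subtopology_subtopology Int_absorb1 T_def)
    have "continuous_map (subtopology (powertop_real UNIV) (T k)) (simplex_topology j) (delete_coord k)"
      using continuous_map_delete_coord[OF _ T] k by simp
    then have "continuous_map (subtopology (powertop_real UNIV) (T k)) (open_cone X) (\<rho> \<circ> delete_coord k)"
      if "singular_simplex j (open_cone X) \<rho>" for \<rho>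
      using that continuous_map_compose by (auto simp: singular_simplex_def)
    then show "continuous_map (subtopology ?Z (T k)) (open_cone X) (f k)"
      using \<sigma>_simplex \<tau>_simplex y_in_topspace by (auto simp: sub f_def)
  next
    fix k l w assume "k \<in> {..Suc j}" "l \<in> {..Suc j}" "w \<in> topspace ?Z \<inter> T k \<inter> T l"
    then show "f k w = f l w" using glue[of k w] glue[of l w] by auto
  next
    fix w assume "w \<in> topspace ?Z"
    then obtain k where "k \<le> Suc j" "w \<in> T k" by (auto simp: T_def simplex_boundary_def)
    then show "\<exists>k. k \<in> {..Suc j} \<and> w \<in> T k \<and> boundary_glue j \<sigma> \<tau> y w = f k w"
      using glue by blast
  qed simp
qed

lemma boundary_glue_in_topspace:
  "w \<in> simplex_boundary (Suc j) \<Longrightarrow> boundary_glue j \<sigma> \<tau> y w \<in> topspace (open_cone X)"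
  using continuous_map_image_subset_topspace[OF continuous_map_boundary_glue] by auto

lemma cone_filling_in_topspace:
  assumes u: "u \<in> standard_simplex (Suc j)"
  shows "cone_filling j \<sigma> \<tau> y u \<in> topspace (open_cone X)"
proof (cases "radius (Suc j) u = 0")
  case True
  then show ?thesis using u y_in_topspace by (simp add: cone_filling_def in_topspace_open_cone)
next
  case False
  then have "0 < radius (Suc j) u" "radius (Suc j) u \<le> 1" using radius_range[OF u] by auto
  then show ?thesis
    using u False boundary_glue_in_topspace[OF radial_proj_in_simplex_boundary[OF u]]
    by (simp add: cone_filling_def cone_rescale_in_topspace)
qed

lemma continuous_map_boundary_glue_radial_proj:
  "continuous_map (subtopology (simplex_topology (Suc j)) {u \<in> standard_simplex (Suc j). radius (Suc j) u > 0})
     (open_cone X) (boundary_glue j \<sigma> \<tau> y \<circ> radial_proj (Suc j))"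
  using continuous_map_radial_proj continuous_map_boundary_glue continuous_map_compose by blast

lemma cone_filling_off_centre:
  "u \<in> {u \<in> standard_simplex (Suc j). radius (Suc j) u > 0} \<Longrightarrow>
    cone_filling j \<sigma> \<tau> y u = cone_rescale (radius (Suc j) u) ((boundary_glue j \<sigma> \<tau> y \<circ> radial_proj (Suc j)) u)"
  by (simp add: cone_filling_def)

lemma continuous_map_height_cone_filling:
  "continuous_map (simplex_topology (Suc j)) euclideanreal (cone_height \<circ> cone_filling j \<sigma> \<tau> y)"
proof (rule continuous_map_squeeze[OF continuous_map_radius])
  let ?R = "{u \<in> standard_simplex (Suc j). radius (Suc j) u > 0}"
  let ?G = "boundary_glue j \<sigma> \<tau> y \<circ> radial_proj (Suc j)"
  have R: "{u \<in> topspace (simplex_topology (Suc j)). 0 < radius (Suc j) u} = ?R" by simp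
  have "continuous_map (subtopology (simplex_topology (Suc j)) ?R) euclideanreal
      (\<lambda>u. radius (Suc j) u * cone_height (?G u))"
    using continuous_map_compose[OF continuous_map_boundary_glue_radial_proj continuous_map_cone_height]
    unfolding subtopology_subtopology
    by (intro continuous_intros continuous_map_radius) (simp add: o_def subtopology_subtopology)
  then show "continuous_map (subtopology (simplex_topology (Suc j))
      {u \<in> topspace (simplex_topology (Suc j)). 0 < radius (Suc j) u}) euclideanreal
      (cone_height \<circ> cone_filling j \<sigma> \<tau> y)"
    unfolding R by (rule continuous_map_eq) (simp add: cone_filling_off_centre)
next
  fix u assume "u \<in> topspace (simplex_topology (Suc j))"
  then have u: "u \<in> standard_simplex (Suc j)" by simp
  have "0 \<le> cone_height (cone_filling j \<sigma> \<tau> y u)"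
    using cone_filling_in_topspace[OF u] by (auto simp: in_topspace_open_cone)
  moreover have "cone_height (cone_filling j \<sigma> \<tau> y u) \<le> radius (Suc j) u"
  proof (cases "radius (Suc j) u = 0")
    case False
    then have r: "0 < radius (Suc j) u" using radius_range[OF u] by auto
    then have "cone_height (boundary_glue j \<sigma> \<tau> y (radial_proj (Suc j) u)) \<le> 1"
      using boundary_glue_in_topspace[OF radial_proj_in_simplex_boundary[OF u]]
      by (auto simp: in_topspace_open_cone)
    then show ?thesis using u r by (simp add: cone_filling_off_centre mult_left_le)
  qed (use u in \<open>simp add: cone_filling_def\<close>)
  ultimately show "\<bar>(cone_height \<circ> cone_filling j \<sigma> \<tau> y) u\<bar> \<le> radius (Suc j) u" by simp
qed

lemma continuous_map_base_cone_filling: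
  "continuous_map (subtopology (simplex_topology (Suc j))
     {u \<in> topspace (simplex_topology (Suc j)). cone_filling j \<sigma> \<tau> y u \<noteq> None}) X
     (cone_base \<circ> cone_filling j \<sigma> \<tau> y)"
proof -
  let ?R = "{u \<in> standard_simplex (Suc j). radius (Suc j) u > 0}"
  let ?G = "boundary_glue j \<sigma> \<tau> y \<circ> radial_proj (Suc j)"
  let ?Q = "{u \<in> topspace (simplex_topology (Suc j)). cone_filling j \<sigma> \<tau> y u \<noteq> None}"
  have QR: "?Q \<subseteq> ?R"
  proof
    fix u assume "u \<in> ?Q"
    then have "u \<in> standard_simplex (Suc j)" "radius (Suc j) u \<noteq> 0"
      by (auto simp: cone_filling_def split: if_splits)
    then show "u \<in> ?R" using radius_range(1)[of u "Suc j"] by auto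
  qed
  have "continuous_map (subtopology (simplex_topology (Suc j)) ?Q) (open_cone X) ?G"
    using continuous_map_from_subtopology[OF continuous_map_boundary_glue_radial_proj, of ?Q] QR
    by (simp add: subtopology_subtopology Int_absorb1 Int_absorb2)
  moreover have "?G u \<noteq> None" if "u \<in> ?Q" for u
  proof
    assume "?G u = None"
    then have "cone_filling j \<sigma> \<tau> y u = None" using that QR cone_filling_off_centre[of u] by auto
    then show False using that by simp
  qed
  ultimately have "continuous_map (subtopology (simplex_topology (Suc j)) ?Q) X (cone_base \<circ> ?G)"
    by (intro continuous_map_cone_base_comp) auto
  then show ?thesis
  proof (rule continuous_map_eq)
    fix u assume "u \<in> topspace (subtopology (simplex_topology (Suc j)) ?Q)"
    then have "u \<in> ?R" using QR by (simp add: subset_iff del: not_None_eq)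
    then show "(cone_base \<circ> ?G) u = (cone_base \<circ> cone_filling j \<sigma> \<tau> y) u"
      by (simp add: cone_filling_off_centre)
  qed
qed

lemma singular_simplex_cone_filling: "singular_simplex (Suc j) (open_cone X) (cone_filling j \<sigma> \<tau> y)"
  unfolding singular_simplex_def
proof
  show "continuous_map (simplex_topology (Suc j)) (open_cone X) (cone_filling j \<sigma> \<tau> y)"
    using cone_filling_in_topspace continuous_map_height_cone_filling continuous_map_base_cone_filling
    by (intro continuous_map_into_open_cone[OF compact]) auto
qed (simp add: cone_filling_def)

lemma cone_filling_simplical_face:
  assumes "i \<le> Suc j" "v \<in> standard_simplex j"
  shows "cone_filling j \<sigma> \<tau> y (simplical_face i v) = (if i = Suc j then \<tau> v else if i = j then \<sigma> v else y)"
proof -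
  have w: "simplical_face i v \<in> simplex_boundary (Suc j)"
    using simplical_face_in_simplex_boundary assms by blast
  then have "cone_filling j \<sigma> \<tau> y (simplical_face i v) = boundary_glue j \<sigma> \<tau> y (simplical_face i v)"
    using simplex_boundary_polar[OF w] by (simp add: cone_filling_def simplex_boundary_def)
  also have "\<dots> = (if i = Suc j then \<tau> v else if i = j then \<sigma> v else y)"
    using boundary_glue_face[of "simplical_face i v" i] w assms(1)
    by (simp add: simplex_boundary_def simplical_face_def[of i v])
  finally show ?thesis .
qed

lemma singular_face_cone_filling:
  "\<And>i. i < j \<Longrightarrow> singular_face (Suc j) i (cone_filling j \<sigma> \<tau> y) = const_simplex j y"
  "singular_face (Suc j) j (cone_filling j \<sigma> \<tau> y) = \<sigma>"
  "singular_face (Suc j) (Suc j) (cone_filling j \<sigma> \<tau> y) = \<tau>"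
  using cone_filling_simplical_face \<sigma>_simplex \<tau>_simplex
  by (auto simp: singular_face_def const_simplex_def singular_simplex_def fun_eq_iff extensional_def)

lemma apex_preimage_cone_filling:
  assumes "y \<noteq> None"
  shows "{u \<in> standard_simplex (Suc j). cone_filling j \<sigma> \<tau> y u = None} \<subseteq>
    {barycentre (Suc j)}
    \<union> face_join (barycentre (Suc j)) j {v \<in> standard_simplex j. \<sigma> v = None}
    \<union> face_join (barycentre (Suc j)) (Suc j) {v \<in> standard_simplex j. \<tau> v = None}"
proof
  fix u assume "u \<in> {u \<in> standard_simplex (Suc j). cone_filling j \<sigma> \<tau> y u = None}"
  then have u: "u \<in> standard_simplex (Suc j)" and apex: "cone_filling j \<sigma> \<tau> y u = None" by auto
  show "u \<in> {barycentre (Suc j)} \<union> face_join (barycentre (Suc j)) j {v \<in> standard_simplex j. \<sigma> v = None}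
    \<union> face_join (barycentre (Suc j)) (Suc j) {v \<in> standard_simplex j. \<tau> v = None}"
  proof (cases "radius (Suc j) u = 0")
    case True
    then show ?thesis using radius_eq_0_imp_barycentre[OF u] by simp
  next
    case False
    let ?r = "radius (Suc j) u" and ?w = "radial_proj (Suc j) u"
    have r: "0 < ?r" "?r \<le> 1" using False radius_range[OF u] by auto
    have w: "?w \<in> standard_simplex (Suc j)"
      using radial_proj_in_simplex_boundary[OF u r(1)] by (simp add: simplex_boundary_def)
    have glue: "boundary_glue j \<sigma> \<tau> y ?w = None"
      using apex u False by (simp add: cone_filling_def)
    have u_eq: "u = (\<lambda>i. (1 - ?r) * barycentre (Suc j) i + ?r * simplical_face k (delete_coord k ?w) i)"
      if "?w k = 0" for k
      using radial_decomposition[OF u r(1)] simplical_face_delete_coord[of ?w k, OF that] by simp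
    show ?thesis
    proof (cases "?w (Suc j) = 0")
      case True
      then have "\<tau> (delete_coord (Suc j) ?w) = None" "delete_coord (Suc j) ?w \<in> standard_simplex j"
        using glue delete_coord_in_standard_simplex[OF w le_refl] by (auto simp: boundary_glue_def)
      then have "delete_coord (Suc j) ?w \<in> {v \<in> standard_simplex j. \<tau> v = None}" by simp
      then have "u \<in> face_join (barycentre (Suc j)) (Suc j) {v \<in> standard_simplex j. \<tau> v = None}"
        using r by (subst u_eq[OF True]) (auto intro: face_join_memI)
      then show ?thesis by blast
    next
      case False
      moreover have "?w j = 0"
        using glue False assms by (auto simp: boundary_glue_def split: if_splits)
      ultimately have "\<sigma> (delete_coord j ?w) = None" "delete_coord j ?w \<in> standard_simplex j"
        using glue delete_coord_in_standard_simplex[OF w] by (auto simp: boundary_glue_def)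
      then have "delete_coord j ?w \<in> {v \<in> standard_simplex j. \<sigma> v = None}" by simp
      then have "u \<in> face_join (barycentre (Suc j)) j {v \<in> standard_simplex j. \<sigma> v = None}"
        using r by (subst u_eq[OF \<open>?w j = 0\<close>]) (auto intro: face_join_memI)
      then show ?thesis by blast
    qed
  qed
qed

end

lemma full_cone_filling:
  assumes "sphere_pair X j \<sigma> \<tau> y" and high: "0 \<le> int j - int n + pv"
    and \<sigma>G: "\<sigma> \<in> gajer X n pv j" and \<tau>G: "\<tau> \<in> gajer X n pv j" and y: "y \<noteq> None"
  shows "full n pv (Suc j) (cone_filling j \<sigma> \<tau> y)"
proof (rule full_SucI)
  interpret sphere_pair X j \<sigma> \<tau> y by fact
  let ?d = "int (Suc j) - (int n + 1) + pv" and ?b = "barycentre (Suc j)"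
  have b: "?b \<in> standard_simplex (Suc j)" "?b j \<noteq> 0" "?b (Suc j) \<noteq> 0"
    by (simp_all add: barycentre_in_standard_simplex) (simp_all add: barycentre_def)
  have apex_set: "poly_dim_le j {v \<in> standard_simplex j. \<rho> v = None} (int j - (int n + 1) + pv)"
    if "\<rho> \<in> gajer X n pv j" for \<rho>
    using full_imp_allowable[of n pv j \<rho>] that by (simp add: gajer_def allowable_def cone_apex_def)
  have "poly_dim_le (Suc j) (face_join ?b j {v \<in> standard_simplex j. \<sigma> v = None}) ?d"
    using poly_dim_le_face_join[OF apex_set[OF \<sigma>G] b(1,2)] by (simp add: algebra_simps)
  moreover have "poly_dim_le (Suc j) (face_join ?b (Suc j) {v \<in> standard_simplex j. \<tau> v = None}) ?d"
    using poly_dim_le_face_join[OF apex_set[OF \<tau>G] b(1,3)] by (simp add: algebra_simps)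
  moreover have "poly_dim_le (Suc j) {?b} ?d"
    using poly_dim_le_singleton[OF b(1)] high by simp
  ultimately have "poly_dim_le (Suc j) ({?b} \<union> face_join ?b j {v \<in> standard_simplex j. \<sigma> v = None}
      \<union> face_join ?b (Suc j) {v \<in> standard_simplex j. \<tau> v = None}) ?d"
    by (intro poly_dim_le_Un)
  then show "allowable n pv (Suc j) (cone_filling j \<sigma> \<tau> y)"
    unfolding allowable_def cone_apex_def
    by (rule poly_dim_le_mono[OF _ apex_preimage_cone_filling[OF y] order_refl])
  fix i assume "i \<le> Suc j"
  then consider "i < j" | "i = j" | "i = Suc j" by linarith
  then show "full n pv j (singular_face (Suc j) i (cone_filling j \<sigma> \<tau> y))"
  proof cases
    case 1
    then show ?thesis using singular_face_cone_filling(1) full_const_simplex[of y n pv j] y by simp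
  qed (use singular_face_cone_filling(2,3) \<sigma>G \<tau>G in \<open>simp_all add: gajer_def\<close>)
qed

lemma shomotopic_gajer_above:
  assumes X: "compact_space X" and high: "0 \<le> int j - int n + pv"
    and vertex: "const_simplex 0 y \<in> gajer X n pv 0"
    and \<sigma>: "\<sigma> \<in> sphere_reps (gajer X n pv) j y" and \<tau>: "\<tau> \<in> sphere_reps (gajer X n pv) j y"
  shows "shomotopic (gajer X n pv) j y \<sigma> \<tau>"
proof -
  have \<sigma>G: "\<sigma> \<in> gajer X n pv j" and \<tau>G: "\<tau> \<in> gajer X n pv j"
    using \<sigma> \<tau> by (auto simp: sphere_reps_def)
  have "y \<in> topspace (open_cone X)"
    using vertex by (auto simp: gajer_def singular_simplex_def continuous_map_def const_simplex_def
        standard_simplex_0)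
  then interpret sphere_pair X j \<sigma> \<tau> y
    using X \<sigma>G \<tau>G sphere_reps_boundary[OF \<sigma>] sphere_reps_boundary[OF \<tau>]
    by unfold_locales (auto simp: gajer_def)
  have "full n pv (Suc j) (cone_filling j \<sigma> \<tau> y)"
  proof (cases "int n + 1 \<le> pv")
    case False
    then have "y \<noteq> None"
      using gajer_apex_free[OF vertex, of "simplex_vertex 0"]
      by (simp add: const_simplex_def standard_simplex_0 simplex_vertex_def)
    then show ?thesis using full_cone_filling sphere_pair_axioms high \<sigma>G \<tau>G by blast
  qed (rule full_if_large_perversity)
  then have "cone_filling j \<sigma> \<tau> y \<in> gajer X n pv (Suc j)"
    using singular_simplex_cone_filling by (simp add: gajer_def)
  then show ?thesis
    unfolding shomotopic_def using singular_face_cone_filling by blast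
qed

theorem mainTheorem19:
  fixes X :: "'a topology" and n :: nat and pv :: int and m :: int
  assumes "compact_space X"
    and "m = (int n + 1) - 2 - pv"
  shows "postnikov_stage_cone X n pv m"
  unfolding postnikov_stage_cone_def
proof (intro conjI allI impI)
  fix j x assume "int j \<le> m"
  then have low: "int (Suc j) - (int n + 1) + pv < 0" using assms(2) by simp
  show "induces_bij_pi (Sing X) (gajer X n pv) cone_incl j x"
    unfolding induces_bij_pi_def
    by (auto intro: gajer_sphere_shomotopic_to_Sing[OF assms(1) low] shomotopic_Sing_of_gajer[OF low])
next
  fix j y assume "m < int j" "const_simplex 0 y \<in> gajer X n pv 0"
  then show "pi_trivial (gajer X n pv) j y"
    unfolding pi_trivial_def using shomotopic_gajer_above[OF assms(1)] assms(2) by auto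
qed

end
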